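(* Let $(\xi_k)_{k\in\mathbb{Z}}$ be a stationary reversible Markov chain, $f\in\mathbb{L}_0^2(\pi)$, $X_k=f(\xi_k)$, $S_k=\sum_{i=1}^kX_i$ ($S_0=0$), $\mathcal{F}_k=\sigma(\xi_i,i\le k)$, $\mathcal{G}_k=\sigma(\xi_i,i\ge k)$, $\mathbb{E}_k(\cdot)=\mathbb{E}(\cdot\mid\mathcal{F}_k)$. Fix $n\ge1$ and set $$\theta_k^n=\frac1n\sum_{i=0}^{n-1}\mathbb{E}_k(X_k+\dots+X_{k+i}),\quad D_k^n=\theta_k^n-\mathbb{E}_{k-1}(\theta_k^n),\quad \tilde D_k^n=\theta_k^n-\mathbb{E}(\theta_k^n\mid\mathcal{G}_{k+1}),$$ $M_k^n=\sum_{i=1}^kD_i^n$, $\tilde M_k^n=\sum_{i=0}^{k-1}\tilde D_i^n$ and $$\bar R_k^n=\frac1n\sum_{i=1}^k\big[\mathbb{E}_{i-1}(S_{n+i-1}-S_{i-1})+\mathbb{E}_i(S_{n+i}-S_i)\big].$$ Then $(D_k^n)_k$ is a martingale difference sequence with respect to $(\mathcal{F}_k)$, $(\tilde D_k^n)_k$ is a (reverse) martingale difference sequence with respect to the decreasing filtration $(\mathcal{G}_k)$ (i.e. $\tilde D^n_k$ is $\mathcal{G}_k$-measurable and $\mathbb{E}(\tilde D_k^n\mid\mathcal{G}_{k+1})=0$), and for every $k\ge1$, $$S_k=\tfrac12\big[(X_k-X_0)+M_k^n+\tilde M_k^n+\bar R_k^n\big]\quad\text{a.s.}$$ Moreover,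 for every $p\ge1$, $\|\max_{1\le i\le n}|\bar R_i^n|\|_p\le 2\|\mathbb{E}_0(S_n)\|_p$, and $\|M_n^n\|_p\le\|S_n\|_p+3\max_{1\le i\le n}\|\mathbb{E}_0(S_i)\|_p$.
   Context: $(\xi_n)_{n\in\mathbb{Z}}$ is a stationary Markov chain with values in a general measurable state space, marginal law $\pi$ and transition kernel $Q(x,A)=\mathbb{P}(\xi_1\in A\mid\xi_0=x)$; reversible means $Q=Q^*$ on $\mathbb{L}^2(\pi)$, equivalently $(\xi_0,\xi_1)$ and $(\xi_1,\xi_0)$ have the same law. $\mathbb{L}_0^2(\pi)$ is the set of measurable $f$ with $\int f^2d\pi<\infty$, $\int fd\pi=0$. For the $\mathbb{L}_p$ bounds, assume in addition $\int|f|^pd\pi<\infty$ (otherwise the right-hand sides may be infinite). *)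

theory Defs
  imports "HOL-Probability.Probability"
begin

definition past_alg :: "'a measure \<Rightarrow> 's measure \<Rightarrow> (int \<Rightarrow> 'a \<Rightarrow> 's) \<Rightarrow> int \<Rightarrow> 'a measure" where
  "past_alg M S \<xi> k = sigma (space M) {\<xi> i -` A \<inter> space M | i A. i \<le> k \<and> A \<in> sets S}"

definition future_alg :: "'a measure \<Rightarrow> 's measure \<Rightarrow> (int \<Rightarrow> 'a \<Rightarrow> 's) \<Rightarrow> int \<Rightarrow> 'a measure" where
  "future_alg M S \<xi> k = sigma (space M) {\<xi> i -` A \<inter> space M | i A. k \<le> i \<and> A \<in> sets S}"

definition stationary_reversible_markov ::
  "'a measure \<Rightarrow> 's measure \<Rightarrow> 's measure \<Rightarrow> ('s \<Rightarrow> 's measure) \<Rightarrow> (int \<Rightarrow> 'a \<Rightarrow> 's) \<Rightarrow> bool" where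
  "stationary_reversible_markov M S \<pi> Q \<xi> \<longleftrightarrow>
     prob_space M \<and>
     (\<forall>k. \<xi> k \<in> measurable M S) \<and>
     Q \<in> measurable S (prob_algebra S) \<and>
     (\<forall>k. distr M S (\<xi> k) = \<pi>) \<and>
     (\<forall>k. \<forall>A\<in>sets S. AE \<omega> in M.
        real_cond_exp M (past_alg M S \<xi> k) (indicator (\<xi> (k + 1) -` A \<inter> space M)) \<omega>
          = measure (Q (\<xi> k \<omega>)) A) \<and>
     distr M (S \<Otimes>\<^sub>M S) (\<lambda>\<omega>. (\<xi> 0 \<omega>, \<xi> 1 \<omega>)) = distr M (S \<Otimes>\<^sub>M S) (\<lambda>\<omega>. (\<xi> 1 \<omega>, \<xi> 0 \<omega>))"

definition Lp_norm :: "'a measure \<Rightarrow> real \<Rightarrow> ('a \<Rightarrow> real) \<Rightarrow> real" where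
  "Lp_norm M p g = (\<integral>\<omega>. \<bar>g \<omega>\<bar> powr p \<partial>M) powr (1 / p)"

end

theory Submission
  imports Defs
begin

text \<open>
  Let \<open>P \<phi> x = \<integral>\<phi> dQ(x)\<close> be the transition operator. The Markov property gives
  \<open>E\<^sub>k \<phi>(\<xi>\<^sub>k\<^sub>+\<^sub>m) = P\<^sup>m \<phi>(\<xi>\<^sub>k)\<close>, hence \<open>\<theta>\<^sub>k = h(\<xi>\<^sub>k)\<close> and \<open>E\<^sub>k\<^sub>-\<^sub>1 \<theta>\<^sub>k = h'(\<xi>\<^sub>k\<^sub>-\<^sub>1)\<close>,
  where \<open>h = (1/n) \<Sum>\<^sub>i\<^sub><\<^sub>n \<Sum>\<^sub>m\<^sub>\<le>\<^sub>i P\<^sup>m f\<close> and \<open>h'\<close> is the same expression in the \<open>P\<^sup>m\<^sup>+\<^sup>1 f\<close>.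
  Reversibility makes \<open>P\<close> self-adjoint with respect to \<open>\<pi>\<close>; testing against cylinder sets of
  the future turns this into the backward Markov property \<open>E(\<phi>(\<xi>\<^sub>k) | \<G>\<^sub>k\<^sub>+\<^sub>1) = P \<phi>(\<xi>\<^sub>k\<^sub>+\<^sub>1)\<close>,
  whence \<open>E(\<theta>\<^sub>k | \<G>\<^sub>k\<^sub>+\<^sub>1) = h'(\<xi>\<^sub>k\<^sub>+\<^sub>1)\<close>. Because \<open>h = h' + f - g/n\<close> with \<open>g = \<Sum>\<^sub>m\<^sub>=\<^sub>1\<^sup>n P\<^sup>m f\<close>,
  the decomposition of \<open>S\<^sub>k\<close> is an identity between telescoping sums. Finally
  \<open>E\<^sub>j(S\<^sub>j\<^sub>+\<^sub>i - S\<^sub>j) = \<Sum>\<^sub>m\<^sub>=\<^sub>1\<^sup>i P\<^sup>m f(\<xi>\<^sub>j)\<close> has, by stationarity, the \<open>L\<^sub>p\<close> norm of \<open>E\<^sub>0 S\<^sub>i\<close>;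
  the remainder and \<open>M\<^sub>n - S\<^sub>n\<close> are averages of such terms, so the \<open>L\<^sub>p\<close> bounds follow from
  Minkowski's inequality.
\<close>

lemma integrable_bind_kernel:
  fixes \<phi> :: "'s \<Rightarrow> real"
  assumes K[measurable]: "K \<in> N \<rightarrow>\<^sub>M subprob_algebra S" and ne: "space N \<noteq> {}"
    and \<phi>[measurable]: "\<phi> \<in> borel_measurable S" and int: "integrable (N \<bind> K) \<phi>"
  shows "AE x in N. integrable (K x) \<phi>" and "integrable N (\<lambda>x. \<integral>y. \<phi> y \<partial>K x)"
proof -
  note nn_integral_measurable_subprob_algebra[measurable]
  have "sets (N \<bind> K) = sets S" by (rule sets_bind[OF sets_kernel[OF K] ne])
  then have [measurable]: "\<phi> \<in> borel_measurable (N \<bind> K)" by (simp cong: measurable_cong_sets)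
  have fin: "(\<integral>\<^sup>+x. \<integral>\<^sup>+y. ennreal (norm (\<phi> y)) \<partial>K x \<partial>N) < \<infinity>"
    using int by (simp add: integrable_iff_bounded nn_integral_bind[OF _ K])
  have "AE x in N. (\<integral>\<^sup>+y. ennreal (norm (\<phi> y)) \<partial>K x) \<noteq> \<infinity>"
    by (rule nn_integral_PInf_AE) (use fin in auto)
  with AE_space show "AE x in N. integrable (K x) \<phi>"
  proof eventually_elim
    case (elim x)
    then have "\<phi> \<in> borel_measurable (K x)" using subprob_measurableD(3)[OF K] by simp
    with elim show ?case by (intro integrableI_bounded) (auto simp: less_top)
  qed
  have "ennreal (norm (\<integral>y. \<phi> y \<partial>K x)) \<le> (\<integral>\<^sup>+y. ennreal (norm (\<phi> y)) \<partial>K x)" for x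
    using integral_norm_bound_ennreal[of "K x" \<phi>]
    by (cases "integrable (K x) \<phi>") (simp_all add: not_integrable_integral_eq)
  then have "(\<integral>\<^sup>+x. ennreal (norm (\<integral>y. \<phi> y \<partial>K x)) \<partial>N) < \<infinity>"
    using fin by (rule le_less_trans[OF nn_integral_mono])
  then show "integrable N (\<lambda>x. \<integral>y. \<phi> y \<partial>K x)" by (intro integrableI_bounded) measurable
qed

lemma integral_bind_kernel_nonneg:
  fixes \<phi> :: "'s \<Rightarrow> real"
  assumes K[measurable]: "K \<in> N \<rightarrow>\<^sub>M subprob_algebra S" and ne: "space N \<noteq> {}"
    and \<phi>[measurable]: "\<phi> \<in> borel_measurable S" and nonneg: "\<And>y. 0 \<le> \<phi> y"
    and int: "integrable (N \<bind> K) \<phi>"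
  shows "(\<integral>x. \<phi> x \<partial>(N \<bind> K)) = (\<integral>x. \<integral>y. \<phi> y \<partial>K x \<partial>N)"
proof -
  note nn_integral_measurable_subprob_algebra[measurable]
  note kernel = integrable_bind_kernel[OF K ne \<phi> int]
  have "sets (N \<bind> K) = sets S" by (rule sets_bind[OF sets_kernel[OF K] ne])
  then have [measurable]: "\<phi> \<in> borel_measurable (N \<bind> K)" by (simp cong: measurable_cong_sets)
  have inner: "AE x in N. ennreal (\<integral>y. \<phi> y \<partial>K x) = (\<integral>\<^sup>+y. ennreal (\<phi> y) \<partial>K x)"
    using kernel(1) by eventually_elim (simp add: nn_integral_eq_integral nonneg)
  have "(\<integral>x. \<phi> x \<partial>(N \<bind> K)) = enn2real (\<integral>\<^sup>+x. \<integral>\<^sup>+y. ennreal (\<phi> y) \<partial>K x \<partial>N)"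
    by (simp add: integral_eq_nn_integral nonneg nn_integral_bind[OF _ K])
  also have "\<dots> = enn2real (\<integral>\<^sup>+x. ennreal (\<integral>y. \<phi> y \<partial>K x) \<partial>N)"
    using inner by (simp add: nn_integral_cong_AE)
  also have "\<dots> = (\<integral>x. \<integral>y. \<phi> y \<partial>K x \<partial>N)"
    by (rule integral_eq_nn_integral[symmetric]) (auto simp: nonneg)
  finally show ?thesis .
qed

lemma integral_bind_kernel:
  fixes \<phi> :: "'s \<Rightarrow> real"
  assumes K[measurable]: "K \<in> N \<rightarrow>\<^sub>M subprob_algebra S" and ne: "space N \<noteq> {}"
    and \<phi>[measurable]: "\<phi> \<in> borel_measurable S" and int: "integrable (N \<bind> K) \<phi>"
  shows "(\<integral>x. \<phi> x \<partial>(N \<bind> K)) = (\<integral>x. \<integral>y. \<phi> y \<partial>K x \<partial>N)"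
proof -
  define \<phi>\<^sub>p \<phi>\<^sub>m where "\<phi>\<^sub>p y = max 0 (\<phi> y)" and "\<phi>\<^sub>m y = max 0 (- \<phi> y)" for y
  have mp[measurable]: "\<phi>\<^sub>p \<in> borel_measurable S" and mm[measurable]: "\<phi>\<^sub>m \<in> borel_measurable S"
    unfolding \<phi>\<^sub>p_def \<phi>\<^sub>m_def by measurable
  have split: "\<phi> y = \<phi>\<^sub>p y - \<phi>\<^sub>m y" for y by (simp add: \<phi>\<^sub>p_def \<phi>\<^sub>m_def)
  have ip: "integrable (N \<bind> K) \<phi>\<^sub>p" and im: "integrable (N \<bind> K) \<phi>\<^sub>m"
    using int unfolding \<phi>\<^sub>p_def \<phi>\<^sub>m_def by auto
  note kp = integrable_bind_kernel[OF K ne mp ip] and km = integrable_bind_kernel[OF K ne mm im]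
  have "AE x in N. (\<integral>y. \<phi> y \<partial>K x) = (\<integral>y. \<phi>\<^sub>p y \<partial>K x) - (\<integral>y. \<phi>\<^sub>m y \<partial>K x)"
    using kp(1) km(1) by eventually_elim (simp add: split)
  then have "(\<integral>x. \<integral>y. \<phi> y \<partial>K x \<partial>N) = (\<integral>x. \<integral>y. \<phi>\<^sub>p y \<partial>K x \<partial>N) - (\<integral>x. \<integral>y. \<phi>\<^sub>m y \<partial>K x \<partial>N)"
    using kp(2) km(2) by (subst integral_cong_AE[of _ _ "\<lambda>x. (\<integral>y. \<phi>\<^sub>p y \<partial>K x) - (\<integral>y. \<phi>\<^sub>m y \<partial>K x)"])
      (auto intro: integral_measurable_subprob_algebra[THEN measurable_compose[OF K]])
  moreover have "(\<integral>x. \<phi> x \<partial>(N \<bind> K)) = (\<integral>x. \<phi>\<^sub>p x \<partial>(N \<bind> K)) - (\<integral>x. \<phi>\<^sub>m x \<partial>(N \<bind> K))"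
    using ip im by (simp add: split)
  ultimately show ?thesis
    using integral_bind_kernel_nonneg[OF K ne, of \<phi>\<^sub>p] integral_bind_kernel_nonneg[OF K ne, of \<phi>\<^sub>m] ip im
    by (simp add: \<phi>\<^sub>p_def \<phi>\<^sub>m_def)
qed

lemma integrable_mult_bounded:
  fixes u v :: "'a \<Rightarrow> real"
  assumes "integrable M u" "v \<in> borel_measurable M" "\<And>\<omega>. \<omega> \<in> space M \<Longrightarrow> \<bar>v \<omega>\<bar> \<le> c"
  shows "integrable M (\<lambda>\<omega>. u \<omega> * v \<omega>)"
proof (rule Bochner_Integration.integrable_bound[where f="\<lambda>\<omega>. \<bar>c\<bar> * u \<omega>"])
  show "AE \<omega> in M. norm (u \<omega> * v \<omega>) \<le> norm (\<bar>c\<bar> * u \<omega>)"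
  proof (rule AE_I2)
    fix \<omega> assume "\<omega> \<in> space M"
    then have "\<bar>v \<omega>\<bar> \<le> \<bar>c\<bar>" using assms(3) by fastforce
    then show "norm (u \<omega> * v \<omega>) \<le> norm (\<bar>c\<bar> * u \<omega>)"
      by (simp add: abs_mult mult.commute[of "\<bar>c\<bar>"] mult_left_mono)
  qed
qed (use assms in auto)

lemma set_integral_eq_on_sigma_sets:
  fixes u v :: "'a \<Rightarrow> real"
  assumes C: "Int_stable C" "C \<subseteq> Pow (space M)" "space M \<in> C" "sigma_sets (space M) C \<subseteq> sets M"
    and u: "integrable M u" and v: "integrable M v"
    and eq: "\<And>A. A \<in> C \<Longrightarrow> (\<integral>\<omega>\<in>A. u \<omega> \<partial>M) = (\<integral>\<omega>\<in>A. v \<omega> \<partial>M)"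
    and A: "A \<in> sigma_sets (space M) C"
  shows "(\<integral>\<omega>\<in>A. u \<omega> \<partial>M) = (\<integral>\<omega>\<in>A. v \<omega> \<partial>M)"
  using C(1,2) A
proof (induction rule: sigma_sets_induct_disjoint)
  case (compl A)
  have A: "A \<in> sets M" using compl(1) C(4) by auto
  have "(\<integral>\<omega>\<in>space M - A. w \<omega> \<partial>M) = (\<integral>\<omega>\<in>space M. w \<omega> \<partial>M) - (\<integral>\<omega>\<in>A. w \<omega> \<partial>M)"
    if "integrable M w" for w :: "'a \<Rightarrow> real"
  proof -
    have "space M = (space M - A) \<union> A" using sets.sets_into_space[OF A] by auto
    then have "(\<integral>\<omega>\<in>space M. w \<omega> \<partial>M) = (\<integral>\<omega>\<in>space M - A. w \<omega> \<partial>M) + (\<integral>\<omega>\<in>A. w \<omega> \<partial>M)"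
      using A that by (metis Diff_disjoint Int_commute integrable_mult_indicator set_integrable_def
          set_integral_Un sets.compl_sets)
    then show ?thesis by simp
  qed
  then show ?case using eq[OF C(3)] compl(2) u v by simp
next
  case (union A)
  have A: "A i \<in> sets M" for i using union(2) C(4) by auto
  have disj: "A i \<inter> A j = {}" if "i \<noteq> j" for i j using union(1) that by (auto simp: disjoint_family_on_def)
  have "(\<integral>\<omega>\<in>(\<Union>i. A i). w \<omega> \<partial>M) = (\<Sum>i. (\<integral>\<omega>\<in>A i. w \<omega> \<partial>M))"
    if "integrable M w" for w :: "'a \<Rightarrow> real"
    using A disj integrable_mult_indicator[OF _ that, of "\<Union>i. A i"]
    by (intro lebesgue_integral_countable_add) (auto simp: set_integrable_def)
  then show ?case using union(3) u v by simp
qed (use eq in \<open>simp_all add: set_lebesgue_integral_def\<close>)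

lemma (in sigma_finite_subalgebra) real_cond_exp_diff_real_cond_exp:
  assumes "integrable M u"
  shows "AE \<omega> in M. real_cond_exp M F (\<lambda>\<omega>. u \<omega> - real_cond_exp M F u \<omega>) \<omega> = 0"
proof -
  have int: "integrable M (real_cond_exp M F u)" by (rule real_cond_exp_int(1)[OF assms])
  have "AE \<omega> in M. real_cond_exp M F (\<lambda>\<omega>. u \<omega> - real_cond_exp M F u \<omega>) \<omega>
      = real_cond_exp M F u \<omega> - real_cond_exp M F (real_cond_exp M F u) \<omega>"
    by (rule real_cond_exp_diff[OF assms int])
  moreover have "AE \<omega> in M. real_cond_exp M F (real_cond_exp M F u) \<omega> = real_cond_exp M F u \<omega>"
    by (rule real_cond_exp_F_meas[OF int]) simp
  ultimately show ?thesis by auto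
qed

section \<open>\<open>L\<^sub>p\<close> norms\<close>

lemma convex_combination_powr_le:
  fixes s t l p :: real
  assumes "0 \<le> s" "0 \<le> t" "0 \<le> l" "l \<le> 1" "1 \<le> p"
  shows "(l * s + (1 - l) * t) powr p \<le> l * s powr p + (1 - l) * t powr p"
proof -
  have scaled: "(c * x) powr p \<le> c * x powr p" if "0 \<le> c" "c \<le> 1" "0 \<le> x" for c x :: real
  proof (cases "c = 0")
    case False
    then have "c powr p \<le> c" using that assms(5) powr_le_one_le[of c p] by simp
    then show ?thesis using that by (simp add: powr_mult mult_right_mono)
  qed simp
  show ?thesis
  proof (cases "s = 0 \<or> t = 0")
    case True
    then show ?thesis using scaled[of "1 - l" t] scaled[of l s] assms by auto
  next
    case False
    then have "s \<in> {0<..}" "t \<in> {0<..}" using assms by auto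
    then show ?thesis using convex_onD[OF powr_convex[OF assms(5)], of "1 - l" s t] assms by simp
  qed
qed

lemma convex_on_abs_powr:
  fixes p :: real
  assumes "1 \<le> p"
  shows "convex_on UNIV (\<lambda>x::real. \<bar>x\<bar> powr p)"
proof (rule convex_onI)
  fix t x y :: real
  assume t: "0 < t" "t < 1"
  have "\<bar>(1 - t) * x + t * y\<bar> powr p \<le> (t * \<bar>y\<bar> + (1 - t) * \<bar>x\<bar>) powr p"
    using t assms by (intro powr_mono2) (auto intro!: order_trans[OF abs_triangle_ineq] simp: abs_mult)
  also have "\<dots> \<le> t * \<bar>y\<bar> powr p + (1 - t) * \<bar>x\<bar> powr p"
    using t assms by (intro convex_combination_powr_le) auto
  finally show "\<bar>(1 - t) *\<^sub>R x + t *\<^sub>R y\<bar> powr p \<le> (1 - t) * \<bar>x\<bar> powr p + t * \<bar>y\<bar> powr p"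
    by simp
qed simp

lemma abs_add_powr_le:
  fixes a b p :: real
  assumes "0 \<le> p"
  shows "\<bar>a + b\<bar> powr p \<le> 2 powr p * (\<bar>a\<bar> powr p + \<bar>b\<bar> powr p)"
proof -
  have "\<bar>a + b\<bar> powr p \<le> (2 * max \<bar>a\<bar> \<bar>b\<bar>) powr p" using assms by (intro powr_mono2) auto
  also have "\<dots> = 2 powr p * max \<bar>a\<bar> \<bar>b\<bar> powr p" by (simp add: powr_mult)
  also have "max \<bar>a\<bar> \<bar>b\<bar> powr p \<le> \<bar>a\<bar> powr p + \<bar>b\<bar> powr p" by (simp add: max_def)
  finally show ?thesis by (simp add: mult_left_mono)
qed

text \<open>With \<open>A, B\<close> the two norms, this is the pointwise step of Minkowski's inequality.\<close>
lemma abs_add_powr_le_weighted: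
  fixes a b A B p :: real
  assumes "0 < A" "0 < B" "1 \<le> p"
  shows "\<bar>a + b\<bar> powr p
    \<le> (A + B) powr p * (A / (A + B) / A powr p * \<bar>a\<bar> powr p + B / (A + B) / B powr p * \<bar>b\<bar> powr p)"
proof -
  define l where "l = A / (A + B)"
  have l: "0 \<le> l" "l \<le> 1" "1 - l = B / (A + B)" using assms by (auto simp: l_def field_simps)
  have "(A + B) * (l * (\<bar>a\<bar> / A) + (1 - l) * (\<bar>b\<bar> / B)) = \<bar>a\<bar> + \<bar>b\<bar>"
    unfolding l(3) using assms by (simp add: l_def distrib_left)
  then have "\<bar>a + b\<bar> \<le> (A + B) * (l * (\<bar>a\<bar> / A) + (1 - l) * (\<bar>b\<bar> / B))"
    by (simp add: abs_triangle_ineq)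
  then have "\<bar>a + b\<bar> powr p \<le> ((A + B) * (l * (\<bar>a\<bar> / A) + (1 - l) * (\<bar>b\<bar> / B))) powr p"
    using assms by (intro powr_mono2) auto
  also have "\<dots> = (A + B) powr p * (l * (\<bar>a\<bar> / A) + (1 - l) * (\<bar>b\<bar> / B)) powr p"
    using assms l by (simp add: powr_mult)
  also have "\<dots> \<le> (A + B) powr p * (l * (\<bar>a\<bar> / A) powr p + (1 - l) * (\<bar>b\<bar> / B) powr p)"
    using assms l by (intro mult_left_mono convex_combination_powr_le) auto
  also have "\<dots> = (A + B) powr p * (l / A powr p * \<bar>a\<bar> powr p + (1 - l) / B powr p * \<bar>b\<bar> powr p)"
    using assms by (simp add: powr_divide)
  also have "\<dots> = (A + B) powr p * (A / (A + B) / A powr p * \<bar>a\<bar> powr p + B / (A + B) / B powr p * \<bar>b\<bar> powr p)"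
    by (simp only: l(3)) (simp add: l_def)
  finally show ?thesis .
qed

definition Lp_integrable :: "'a measure \<Rightarrow> real \<Rightarrow> ('a \<Rightarrow> real) \<Rightarrow> bool" where
  "Lp_integrable M p u \<longleftrightarrow> u \<in> borel_measurable M \<and> integrable M (\<lambda>\<omega>. \<bar>u \<omega>\<bar> powr p)"

lemma Lp_integrable_measurable: "Lp_integrable M p u \<Longrightarrow> u \<in> borel_measurable M"
  unfolding Lp_integrable_def by simp

lemma Lp_integrable_add:
  assumes "0 \<le> p" "Lp_integrable M p u" "Lp_integrable M p v"
  shows "Lp_integrable M p (\<lambda>\<omega>. u \<omega> + v \<omega>)"
  unfolding Lp_integrable_def
proof
  show m: "(\<lambda>\<omega>. u \<omega> + v \<omega>) \<in> borel_measurable M"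
    using assms by (auto simp: Lp_integrable_def)
  show "integrable M (\<lambda>\<omega>. \<bar>u \<omega> + v \<omega>\<bar> powr p)"
  proof (rule Bochner_Integration.integrable_bound)
    show "integrable M (\<lambda>\<omega>. 2 powr p * (\<bar>u \<omega>\<bar> powr p + \<bar>v \<omega>\<bar> powr p))"
      using assms by (auto simp: Lp_integrable_def)
    show "AE \<omega> in M. norm (\<bar>u \<omega> + v \<omega>\<bar> powr p) \<le> norm (2 powr p * (\<bar>u \<omega>\<bar> powr p + \<bar>v \<omega>\<bar> powr p))"
      using abs_add_powr_le[OF assms(1)] by auto
  qed (use m in measurable)
qed

lemma Lp_integrable_cmult: "Lp_integrable M p u \<Longrightarrow> Lp_integrable M p (\<lambda>\<omega>. c * u \<omega>)"
  by (auto simp: Lp_integrable_def abs_mult powr_mult)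

lemma Lp_integrable_diff:
  assumes "0 \<le> p" "Lp_integrable M p u" "Lp_integrable M p v"
  shows "Lp_integrable M p (\<lambda>\<omega>. u \<omega> - v \<omega>)"
  using Lp_integrable_add[OF assms(1,2) Lp_integrable_cmult[OF assms(3), of "-1"]] by simp

lemma Lp_integrable_abs: "Lp_integrable M p u \<Longrightarrow> Lp_integrable M p (\<lambda>\<omega>. \<bar>u \<omega>\<bar>)"
  unfolding Lp_integrable_def by auto

lemma Lp_integrable_sum:
  assumes "0 \<le> p" "\<And>i. i \<in> I \<Longrightarrow> Lp_integrable M p (u i)"
  shows "Lp_integrable M p (\<lambda>\<omega>. \<Sum>i\<in>I. u i \<omega>)"
  using assms(2)
proof (induction I rule: infinite_finite_induct)
  case (insert x F)
  then show ?case using Lp_integrable_add[OF assms(1), of M "u x" "\<lambda>\<omega>. \<Sum>i\<in>F. u i \<omega>"] by simp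
qed (simp_all add: Lp_integrable_def)

lemma Lp_integrable_cong_AE:
  assumes "AE \<omega> in M. u \<omega> = v \<omega>" "v \<in> borel_measurable M" "Lp_integrable M p u"
  shows "Lp_integrable M p v"
  using assms unfolding Lp_integrable_def
  by (auto intro: integrable_cong_AE[THEN iffD1, rotated 3])

lemma Lp_norm_nonneg: "0 \<le> Lp_norm M p u"
  unfolding Lp_norm_def by simp

lemma Lp_norm_abs: "Lp_norm M p (\<lambda>\<omega>. \<bar>u \<omega>\<bar>) = Lp_norm M p u"
  by (simp add: Lp_norm_def)

lemma Lp_norm_cong_AE:
  assumes "AE \<omega> in M. u \<omega> = v \<omega>" "u \<in> borel_measurable M" "v \<in> borel_measurable M"
  shows "Lp_norm M p u = Lp_norm M p v"
  unfolding Lp_norm_def using assms by (subst integral_cong_AE[where g="\<lambda>\<omega>. \<bar>v \<omega>\<bar> powr p"]) auto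

lemma Lp_norm_cmult:
  assumes "0 < p"
  shows "Lp_norm M p (\<lambda>\<omega>. c * u \<omega>) = \<bar>c\<bar> * Lp_norm M p u"
proof -
  have "Lp_norm M p (\<lambda>\<omega>. c * u \<omega>) = (\<bar>c\<bar> powr p) powr (1/p) * Lp_norm M p u"
    unfolding Lp_norm_def by (simp add: abs_mult powr_mult)
  also have "(\<bar>c\<bar> powr p) powr (1/p) = \<bar>c\<bar>" using assms by (simp add: powr_powr)
  finally show ?thesis .
qed

lemma Lp_norm_mono:
  assumes "0 < p" "AE \<omega> in M. \<bar>u \<omega>\<bar> \<le> \<bar>v \<omega>\<bar>" "u \<in> borel_measurable M" "Lp_integrable M p v"
  shows "Lp_norm M p u \<le> Lp_norm M p v"
proof -
  have "(\<integral>\<omega>. \<bar>u \<omega>\<bar> powr p \<partial>M) \<le> (\<integral>\<omega>. \<bar>v \<omega>\<bar> powr p \<partial>M)"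
  proof (rule integral_mono_AE')
    show "integrable M (\<lambda>\<omega>. \<bar>v \<omega>\<bar> powr p)" using assms by (simp add: Lp_integrable_def)
    show "AE \<omega> in M. \<bar>u \<omega>\<bar> powr p \<le> \<bar>v \<omega>\<bar> powr p"
      using assms(2) by eventually_elim (use assms(1) in \<open>auto intro: powr_mono2\<close>)
  qed simp
  then show ?thesis unfolding Lp_norm_def using assms(1)
    by (intro powr_mono2) (auto intro!: integral_nonneg_AE)
qed

lemma Lp_norm_eq_0_imp_AE_zero:
  assumes "0 < p" "Lp_integrable M p u" "Lp_norm M p u = 0"
  shows "AE \<omega> in M. u \<omega> = 0"
proof -
  have "(\<integral>\<omega>. \<bar>u \<omega>\<bar> powr p \<partial>M) = 0" using assms(3) unfolding Lp_norm_def by simp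
  then have "AE \<omega> in M. \<bar>u \<omega>\<bar> powr p = 0"
    using integral_nonneg_eq_0_iff_AE[of M "\<lambda>\<omega>. \<bar>u \<omega>\<bar> powr p"] assms(2)
    by (simp add: Lp_integrable_def)
  then show ?thesis by auto
qed

lemma Lp_norm_triangle:
  assumes p: "1 \<le> p" and u: "Lp_integrable M p u" and v: "Lp_integrable M p v"
  shows "Lp_norm M p (\<lambda>\<omega>. u \<omega> + v \<omega>) \<le> Lp_norm M p u + Lp_norm M p v"
proof -
  have p0: "0 < p" using p by simp
  have [measurable]: "u \<in> borel_measurable M" "v \<in> borel_measurable M"
    using u v by (auto simp: Lp_integrable_def)
  define A B where "A = Lp_norm M p u" and "B = Lp_norm M p v"
  consider "A = 0" | "B = 0" | "0 < A" "0 < B"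
    using Lp_norm_nonneg[of M p] by (auto simp: A_def B_def order_le_less)
  then show ?thesis
  proof cases
    case 1
    then have "AE \<omega> in M. u \<omega> + v \<omega> = v \<omega>" using Lp_norm_eq_0_imp_AE_zero[OF p0 u] by (simp add: A_def)
    then show ?thesis using 1 by (subst Lp_norm_cong_AE) (auto simp: A_def)
  next
    case 2
    then have "AE \<omega> in M. u \<omega> + v \<omega> = u \<omega>" using Lp_norm_eq_0_imp_AE_zero[OF p0 v] by (simp add: B_def)
    then show ?thesis using 2 by (subst Lp_norm_cong_AE) (auto simp: B_def)
  next
    case 3
    have A: "(\<integral>\<omega>. \<bar>u \<omega>\<bar> powr p \<partial>M) = A powr p" and B: "(\<integral>\<omega>. \<bar>v \<omega>\<bar> powr p \<partial>M) = B powr p"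
      using p0 by (simp_all add: A_def B_def Lp_norm_def powr_powr)
    have "(\<integral>\<omega>. \<bar>u \<omega> + v \<omega>\<bar> powr p \<partial>M)
      \<le> (\<integral>\<omega>. (A + B) powr p * (A / (A + B) / A powr p * \<bar>u \<omega>\<bar> powr p
                                  + B / (A + B) / B powr p * \<bar>v \<omega>\<bar> powr p) \<partial>M)"
      using Lp_integrable_add[OF _ u v] u v p 3
      by (intro integral_mono abs_add_powr_le_weighted) (auto simp: Lp_integrable_def)
    also have "\<dots> = (A + B) powr p"
      using u v 3 by (simp add: Lp_integrable_def A B add_divide_distrib[symmetric])
    finally have "(\<integral>\<omega>. \<bar>u \<omega> + v \<omega>\<bar> powr p \<partial>M) powr (1/p) \<le> ((A + B) powr p) powr (1/p)"
      using p0 by (intro powr_mono2) auto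
    also have "\<dots> = A + B" using 3 p0 by (simp add: powr_powr)
    finally show ?thesis unfolding Lp_norm_def A_def B_def .
  qed
qed

lemma Lp_norm_diff_le:
  assumes p: "1 \<le> p" and u: "Lp_integrable M p u" and v: "Lp_integrable M p v"
  shows "Lp_norm M p (\<lambda>\<omega>. u \<omega> - v \<omega>) \<le> Lp_norm M p u + Lp_norm M p v"
  using Lp_norm_triangle[OF p u Lp_integrable_cmult[OF v, of "-1"]] Lp_norm_cmult[of p M "-1" v] p
  by simp

lemma Lp_norm_sum_le:
  assumes p: "1 \<le> p" and u: "\<And>i. i \<in> I \<Longrightarrow> Lp_integrable M p (u i)"
  shows "Lp_norm M p (\<lambda>\<omega>. \<Sum>i\<in>I. u i \<omega>) \<le> (\<Sum>i\<in>I. Lp_norm M p (u i))"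
  using u
proof (induction I rule: infinite_finite_induct)
  case (insert x F)
  have "Lp_norm M p (\<lambda>\<omega>. \<Sum>i\<in>insert x F. u i \<omega>) = Lp_norm M p (\<lambda>\<omega>. u x \<omega> + (\<Sum>i\<in>F. u i \<omega>))"
    using insert by simp
  also have "\<dots> \<le> Lp_norm M p (u x) + Lp_norm M p (\<lambda>\<omega>. \<Sum>i\<in>F. u i \<omega>)"
    using insert p by (intro Lp_norm_triangle Lp_integrable_sum) auto
  also have "\<dots> \<le> Lp_norm M p (u x) + (\<Sum>i\<in>F. Lp_norm M p (u i))" using insert by simp
  finally show ?case using insert by simp
qed (use p in \<open>simp_all add: Lp_norm_def\<close>)

lemma (in sigma_finite_subalgebra) Lp_integrable_real_cond_exp:
  assumes p: "1 \<le> p" and Y: "integrable M Y" "Lp_integrable M p Y"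
  shows "Lp_integrable M p (real_cond_exp M F Y)"
proof -
  have int_p: "integrable M (\<lambda>\<omega>. \<bar>Y \<omega>\<bar> powr p)" using Y by (simp add: Lp_integrable_def)
  have "AE \<omega> in M. \<bar>real_cond_exp M F Y \<omega>\<bar> powr p \<le> real_cond_exp M F (\<lambda>\<omega>. \<bar>Y \<omega>\<bar> powr p) \<omega>"
    by (rule real_cond_exp_jensens_inequality(2)[OF Y(1) _ _ int_p convex_on_abs_powr[OF p]]) auto
  then have "integrable M (\<lambda>\<omega>. \<bar>real_cond_exp M F Y \<omega>\<bar> powr p)"
    by (intro Bochner_Integration.integrable_bound[OF real_cond_exp_int(1)[OF int_p]]) auto
  then show ?thesis unfolding Lp_integrable_def by simp
qed

section \<open>The chain and its transition operator\<close>

locale reversible_markov_chain =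
  fixes M :: "'a measure" and S :: "'s measure" and \<pi> :: "'s measure"
    and Q :: "'s \<Rightarrow> 's measure" and \<xi> :: "int \<Rightarrow> 'a \<Rightarrow> 's"
  assumes chain: "stationary_reversible_markov M S \<pi> Q \<xi>"
begin

sublocale prob_space M
  using chain unfolding stationary_reversible_markov_def by blast

lemma measurable_xi[measurable]: "\<xi> k \<in> M \<rightarrow>\<^sub>M S"
  and measurable_Q: "Q \<in> S \<rightarrow>\<^sub>M prob_algebra S"
  and distr_xi: "distr M S (\<xi> k) = \<pi>"
  and markov_property: "A \<in> sets S \<Longrightarrow> AE \<omega> in M.
        real_cond_exp M (past_alg M S \<xi> k) (indicator (\<xi> (k + 1) -` A \<inter> space M)) \<omega>
          = measure (Q (\<xi> k \<omega>)) A"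
  and reversible: "distr M (S \<Otimes>\<^sub>M S) (\<lambda>\<omega>. (\<xi> 0 \<omega>, \<xi> 1 \<omega>)) = distr M (S \<Otimes>\<^sub>M S) (\<lambda>\<omega>. (\<xi> 1 \<omega>, \<xi> 0 \<omega>))"
  using chain unfolding stationary_reversible_markov_def by blast+

lemma measurable_Q_subprob[measurable]: "Q \<in> S \<rightarrow>\<^sub>M subprob_algebra S"
  by (rule measurable_prob_algebraD[OF measurable_Q])

lemma prob_space_Q: "x \<in> space S \<Longrightarrow> prob_space (Q x)"
  and sets_Q: "x \<in> space S \<Longrightarrow> sets (Q x) = sets S"
  using measurable_space[OF measurable_Q] by (auto simp: space_prob_algebra)

lemma prob_space_pi: "prob_space \<pi>"
  using prob_space_distr[OF measurable_xi, of 0] distr_xi[of 0] by simp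

lemma sets_pi: "sets \<pi> = sets S"
  using distr_xi[of 0] sets_distr[of M S "\<xi> 0"] by simp

abbreviation "\<F> k \<equiv> past_alg M S \<xi> k"
abbreviation "\<G> k \<equiv> future_alg M S \<xi> k"

lemma sets_past: "sets (\<F> k) = sigma_sets (space M) {\<xi> i -` A \<inter> space M | i A. i \<le> k \<and> A \<in> sets S}"
  and space_past[simp]: "space (\<F> k) = space M"
  unfolding past_alg_def by (auto intro!: sets_measure_of space_measure_of)

lemma sets_future: "sets (\<G> k) = sigma_sets (space M) {\<xi> i -` A \<inter> space M | i A. k \<le> i \<and> A \<in> sets S}"
  and space_future[simp]: "space (\<G> k) = space M"
  unfolding future_alg_def by (auto intro!: sets_measure_of space_measure_of)

lemma subalgebra_past: "subalgebra M (\<F> k)"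
  unfolding subalgebra_def sets_past by (auto intro!: sets.sigma_sets_subset)

lemma subalgebra_future: "subalgebra M (\<G> k)"
  unfolding subalgebra_def sets_future by (auto intro!: sets.sigma_sets_subset)

lemma past_mono: "j \<le> k \<Longrightarrow> subalgebra (\<F> k) (\<F> j)"
  unfolding subalgebra_def sets_past by (auto intro!: sigma_sets_mono' dest: order_trans)

lemma future_mono: "k \<le> j \<Longrightarrow> subalgebra (\<G> k) (\<G> j)"
  unfolding subalgebra_def sets_future by (auto intro!: sigma_sets_mono' dest: order_trans)

lemma measurable_xi_past: "j \<le> k \<Longrightarrow> \<xi> j \<in> \<F> k \<rightarrow>\<^sub>M S"
  by (rule measurableI) (auto simp: sets_past measurable_space[OF measurable_xi])

lemma measurable_xi_future: "k \<le> j \<Longrightarrow> \<xi> j \<in> \<G> k \<rightarrow>\<^sub>M S"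
  by (rule measurableI) (auto simp: sets_future measurable_space[OF measurable_xi])

lemma sigma_finite_past: "sigma_finite_subalgebra M (\<F> k)"
  and sigma_finite_future: "sigma_finite_subalgebra M (\<G> k)"
  by (auto intro!: finite_measure_subalgebra_is_sigma_finite subalgebra_past subalgebra_future
      simp: finite_measure_subalgebra_def finite_measure_subalgebra_axioms_def)

lemma integrable_xi_iff:
  fixes \<phi> :: "'s \<Rightarrow> real"
  shows "\<phi> \<in> borel_measurable S \<Longrightarrow> integrable M (\<lambda>\<omega>. \<phi> (\<xi> k \<omega>)) \<longleftrightarrow> integrable \<pi> \<phi>"
  using integrable_distr_eq[OF measurable_xi, of \<phi> k] distr_xi[of k] by simp

lemma integral_xi:
  fixes \<phi> :: "'s \<Rightarrow> real"
  shows "\<phi> \<in> borel_measurable S \<Longrightarrow> (\<integral>\<omega>. \<phi> (\<xi> k \<omega>) \<partial>M) = (\<integral>x. \<phi> x \<partial>\<pi>)"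
  using integral_distr[OF measurable_xi, of \<phi> k] distr_xi[of k] by simp

lemma integrable_pi_bounded:
  fixes \<psi> :: "'s \<Rightarrow> real"
  assumes "\<psi> \<in> borel_measurable S" "\<And>x. x \<in> space S \<Longrightarrow> \<bar>\<psi> x\<bar> \<le> c"
  shows "integrable \<pi> \<psi>"
proof -
  have "integrable M (\<lambda>\<omega>. \<psi> (\<xi> 0 \<omega>))"
    by (rule integrable_const_bound[where B=c]) (use assms in \<open>auto intro!: measurable_space[OF measurable_xi]\<close>)
  then show ?thesis using integrable_xi_iff[OF assms(1)] by simp
qed

definition transition_op :: "('s \<Rightarrow> real) \<Rightarrow> 's \<Rightarrow> real" where
  "transition_op \<phi> x = (\<integral>y. \<phi> y \<partial>Q x)"

lemma measurable_transition_op[measurable]: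
  "\<phi> \<in> borel_measurable S \<Longrightarrow> transition_op \<phi> \<in> borel_measurable S"
  unfolding transition_op_def
  by (rule measurable_compose[OF measurable_Q_subprob integral_measurable_subprob_algebra])

lemma abs_transition_op_le:
  fixes \<psi> :: "'s \<Rightarrow> real"
  assumes [measurable]: "\<psi> \<in> borel_measurable S" and bound: "\<And>x. x \<in> space S \<Longrightarrow> \<bar>\<psi> x\<bar> \<le> c"
    and x: "x \<in> space S"
  shows "\<bar>transition_op \<psi> x\<bar> \<le> c"
proof -
  interpret Qx: prob_space "Q x" by (rule prob_space_Q[OF x])
  have sQ: "sets (Q x) = sets S" "space (Q x) = space S"
    using sets_Q[OF x] sets_eq_imp_space_eq by auto
  then have "\<psi> \<in> borel_measurable (Q x)" by (simp cong: measurable_cong_sets)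
  then have "integrable (Q x) (\<lambda>y. \<bar>\<psi> y\<bar>)"
    by (intro Qx.integrable_const_bound[where B=c]) (use bound sQ in auto)
  then have "(\<integral>y. \<bar>\<psi> y\<bar> \<partial>Q x) \<le> c" by (rule Qx.integral_le_const) (use bound sQ in auto)
  then show ?thesis unfolding transition_op_def by (rule order_trans[OF integral_abs_bound])
qed

lemma nn_integral_past_set_times_next:
  assumes A: "A \<in> sets (\<F> k)" and B: "B \<in> sets S"
  shows "(\<integral>\<^sup>+\<omega>. indicator A \<omega> * indicator (\<xi> (k+1) -` B \<inter> space M) \<omega> \<partial>M)
       = (\<integral>\<^sup>+\<omega>. indicator A \<omega> * emeasure (Q (\<xi> k \<omega>)) B \<partial>M)"
proof -
  interpret sigma_finite_subalgebra M "\<F> k" by (rule sigma_finite_past)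
  have [measurable]: "A \<in> sets M" using A subalgebra_past[of k] by (auto simp: subalgebra_def)
  have [measurable]: "indicator A \<in> borel_measurable (\<F> k)" using A by measurable
  have [measurable]: "\<xi> (k+1) -` B \<inter> space M \<in> sets M" using B by measurable
  have [measurable]: "(\<lambda>\<omega>. measure (Q (\<xi> k \<omega>)) B) \<in> borel_measurable M" using B by measurable
  have prob: "\<omega> \<in> space M \<Longrightarrow> prob_space (Q (\<xi> k \<omega>))" for \<omega>
    by (intro prob_space_Q measurable_space[OF measurable_xi])
  have int_next: "integrable M (\<lambda>\<omega>. indicator A \<omega> * indicator (\<xi> (k+1) -` B \<inter> space M) \<omega> :: real)"
    using B by (intro integrable_const_bound[where B=1]) (auto simp: indicator_def)
  have int_Q: "integrable M (\<lambda>\<omega>. indicator A \<omega> * measure (Q (\<xi> k \<omega>)) B)"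
    by (intro integrable_const_bound[where B=1]) (auto simp: indicator_def intro!: prob_space.prob_le_1 prob)
  have "(\<integral>\<omega>. indicator A \<omega> * (indicator (\<xi> (k+1) -` B \<inter> space M) \<omega> :: real) \<partial>M)
      = (\<integral>\<omega>. indicator A \<omega> * real_cond_exp M (\<F> k) (indicator (\<xi> (k+1) -` B \<inter> space M)) \<omega> \<partial>M)"
    by (rule real_cond_exp_intg(2)[symmetric]) (use int_next in auto)
  also have "\<dots> = (\<integral>\<omega>. indicator A \<omega> * measure (Q (\<xi> k \<omega>)) B \<partial>M)"
    by (rule integral_cong_AE) (use markov_property[OF B, of k] in auto)
  finally have eq: "(\<integral>\<omega>. indicator A \<omega> * (indicator (\<xi> (k+1) -` B \<inter> space M) \<omega> :: real) \<partial>M)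
      = (\<integral>\<omega>. indicator A \<omega> * measure (Q (\<xi> k \<omega>)) B \<partial>M)" .
  have "(\<integral>\<^sup>+\<omega>. indicator A \<omega> * indicator (\<xi> (k+1) -` B \<inter> space M) \<omega> \<partial>M)
       = (\<integral>\<^sup>+\<omega>. ennreal (indicator A \<omega> * indicator (\<xi> (k+1) -` B \<inter> space M) \<omega>) \<partial>M)"
    by (intro nn_integral_cong) (auto simp: indicator_def)
  also have "\<dots> = (\<integral>\<^sup>+\<omega>. ennreal (indicator A \<omega> * measure (Q (\<xi> k \<omega>)) B) \<partial>M)"
    using eq int_next int_Q by (simp add: nn_integral_eq_integral)
  also have "\<dots> = (\<integral>\<^sup>+\<omega>. indicator A \<omega> * emeasure (Q (\<xi> k \<omega>)) B \<partial>M)"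
    using prob by (intro nn_integral_cong)
      (simp add: indicator_def finite_measure.emeasure_eq_measure prob_space.finite_measure)
  finally show ?thesis .
qed

lemma distr_restrict_past_next:
  assumes A: "A \<in> sets (\<F> k)"
  defines "N \<equiv> density M (\<lambda>\<omega>. ennreal (indicator A \<omega>))"
  shows "distr N S (\<xi> (k+1)) = N \<bind> (\<lambda>\<omega>. Q (\<xi> k \<omega>))"
proof (rule measure_eqI)
  have [measurable]: "A \<in> sets M" using A subalgebra_past[of k] by (auto simp: subalgebra_def)
  have sN: "sets N = sets M" "space N \<noteq> {}" "space N = space M" unfolding N_def by (auto simp: not_empty)
  have K: "(\<lambda>\<omega>. Q (\<xi> k \<omega>)) \<in> N \<rightarrow>\<^sub>M subprob_algebra S"
    and xiN: "\<xi> (k+1) \<in> N \<rightarrow>\<^sub>M S"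
    using sN(1) by (simp_all cong: measurable_cong_sets)
  show "sets (distr N S (\<xi> (k+1))) = sets (N \<bind> (\<lambda>\<omega>. Q (\<xi> k \<omega>)))"
    using sets_bind[OF sets_kernel[OF K] sN(2)] by simp
  fix B assume "B \<in> sets (distr N S (\<xi> (k+1)))"
  then have B[measurable]: "B \<in> sets S" by simp
  have "emeasure (distr N S (\<xi> (k+1))) B = emeasure N (\<xi> (k+1) -` B \<inter> space M)"
    using xiN sN by (simp add: emeasure_distr)
  also have "\<dots> = (\<integral>\<^sup>+\<omega>. indicator A \<omega> * indicator (\<xi> (k+1) -` B \<inter> space M) \<omega> \<partial>M)"
    unfolding N_def by (subst emeasure_density)
      (auto simp: nn_integral_set_ennreal mult.commute intro!: nn_integral_cong split: split_indicator)
  also have "\<dots> = (\<integral>\<^sup>+\<omega>. indicator A \<omega> * emeasure (Q (\<xi> k \<omega>)) B \<partial>M)"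
    by (rule nn_integral_past_set_times_next[OF A B])
  also have "\<dots> = emeasure (N \<bind> (\<lambda>\<omega>. Q (\<xi> k \<omega>))) B"
    unfolding emeasure_bind[OF sN(2) K B] unfolding N_def
    by (subst nn_integral_density) (auto intro!: nn_integral_cong split: split_indicator)
  finally show "emeasure (distr N S (\<xi> (k+1))) B = emeasure (N \<bind> (\<lambda>\<omega>. Q (\<xi> k \<omega>))) B" .
qed

lemma markov_property_set_integral:
  fixes \<phi> :: "'s \<Rightarrow> real"
  assumes A: "A \<in> sets (\<F> k)" and \<phi>[measurable]: "\<phi> \<in> borel_measurable S"
    and int_\<phi>: "integrable \<pi> \<phi>"
  shows "integrable M (\<lambda>\<omega>. indicator A \<omega> * transition_op \<phi> (\<xi> k \<omega>))"
    and "(\<integral>\<omega>. indicator A \<omega> * \<phi> (\<xi> (k+1) \<omega>) \<partial>M)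
       = (\<integral>\<omega>. indicator A \<omega> * transition_op \<phi> (\<xi> k \<omega>) \<partial>M)"
proof -
  have [measurable]: "A \<in> sets M" using A subalgebra_past[of k] by (auto simp: subalgebra_def)
  define N where "N = density M (\<lambda>\<omega>. ennreal (indicator A \<omega>))"
  have sN: "sets N = sets M" "space N \<noteq> {}" unfolding N_def by (auto simp: not_empty)
  have K: "(\<lambda>\<omega>. Q (\<xi> k \<omega>)) \<in> N \<rightarrow>\<^sub>M subprob_algebra S"
    and xiN: "\<xi> (k+1) \<in> N \<rightarrow>\<^sub>M S"
    using sN(1) by (simp_all cong: measurable_cong_sets)
  note law = distr_restrict_past_next[OF A, folded N_def]
  have "integrable M (\<lambda>\<omega>. indicator A \<omega> * \<phi> (\<xi> (k+1) \<omega>))"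
    using integrable_real_mult_indicator[of A M "\<lambda>\<omega>. \<phi> (\<xi> (k+1) \<omega>)"] int_\<phi> integrable_xi_iff[OF \<phi>]
    by (simp add: mult.commute)
  then have "integrable N (\<lambda>\<omega>. \<phi> (\<xi> (k+1) \<omega>))" unfolding N_def by (simp add: integrable_density)
  then have int_bind: "integrable (N \<bind> (\<lambda>\<omega>. Q (\<xi> k \<omega>))) \<phi>"
    using law integrable_distr_eq[OF xiN \<phi>] by simp
  have "integrable N (\<lambda>\<omega>. transition_op \<phi> (\<xi> k \<omega>))"
    using integrable_bind_kernel(2)[OF K sN(2) \<phi> int_bind] unfolding transition_op_def .
  then show "integrable M (\<lambda>\<omega>. indicator A \<omega> * transition_op \<phi> (\<xi> k \<omega>))"
    unfolding N_def by (simp add: integrable_density)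
  have "(\<integral>\<omega>. indicator A \<omega> * \<phi> (\<xi> (k+1) \<omega>) \<partial>M) = (\<integral>x. \<phi> x \<partial>distr N S (\<xi> (k+1)))"
    unfolding N_def by (simp add: integral_density integral_distr)
  also have "\<dots> = (\<integral>\<omega>. transition_op \<phi> (\<xi> k \<omega>) \<partial>N)"
    unfolding law integral_bind_kernel[OF K sN(2) \<phi> int_bind] transition_op_def ..
  also have "\<dots> = (\<integral>\<omega>. indicator A \<omega> * transition_op \<phi> (\<xi> k \<omega>) \<partial>M)"
    unfolding N_def by (simp add: integral_density)
  finally show "(\<integral>\<omega>. indicator A \<omega> * \<phi> (\<xi> (k+1) \<omega>) \<partial>M)
      = (\<integral>\<omega>. indicator A \<omega> * transition_op \<phi> (\<xi> k \<omega>) \<partial>M)" .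
qed

lemma integrable_transition_op:
  fixes \<phi> :: "'s \<Rightarrow> real"
  assumes \<phi>[measurable]: "\<phi> \<in> borel_measurable S" and "integrable \<pi> \<phi>"
  shows "integrable \<pi> (transition_op \<phi>)"
  using markov_property_set_integral(1)[OF sets.top \<phi> assms(2), of 0] integrable_xi_iff[of _ 0]
  by (simp add: indicator_def cong: Bochner_Integration.integrable_cong)

lemma cond_exp_past_next:
  fixes \<phi> :: "'s \<Rightarrow> real"
  assumes \<phi>[measurable]: "\<phi> \<in> borel_measurable S" and int_\<phi>: "integrable \<pi> \<phi>"
  shows "AE \<omega> in M. real_cond_exp M (\<F> k) (\<lambda>\<omega>. \<phi> (\<xi> (k+1) \<omega>)) \<omega> = transition_op \<phi> (\<xi> k \<omega>)"
proof (rule sigma_finite_subalgebra.real_cond_exp_charact[OF sigma_finite_past])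
  fix A assume "A \<in> sets (\<F> k)"
  then show "(\<integral>\<omega>\<in>A. \<phi> (\<xi> (k+1) \<omega>) \<partial>M) = (\<integral>\<omega>\<in>A. transition_op \<phi> (\<xi> k \<omega>) \<partial>M)"
    unfolding set_lebesgue_integral_def using markov_property_set_integral(2)[OF _ \<phi> int_\<phi>] by simp
qed (use int_\<phi> integrable_transition_op[OF \<phi> int_\<phi>] in
      \<open>simp_all add: integrable_xi_iff measurable_compose[OF measurable_xi_past]\<close>)

lemma measurable_transition_op_iter[measurable]:
  "\<phi> \<in> borel_measurable S \<Longrightarrow> (transition_op ^^ m) \<phi> \<in> borel_measurable S"
  by (induction m) simp_all

lemma integrable_transition_op_iter:
  fixes \<phi> :: "'s \<Rightarrow> real"
  shows "\<phi> \<in> borel_measurable S \<Longrightarrow> integrable \<pi> \<phi> \<Longrightarrow> integrable \<pi> ((transition_op ^^ m) \<phi>)"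
  by (induction m) (simp_all add: integrable_transition_op)

lemma cond_exp_past_via_next:
  fixes W :: "'a \<Rightarrow> real" and \<psi> :: "'s \<Rightarrow> real"
  assumes W: "integrable M W" and \<psi>[measurable]: "\<psi> \<in> borel_measurable S" and int_\<psi>: "integrable \<pi> \<psi>"
    and next_eq: "AE \<omega> in M. real_cond_exp M (\<F> (k + 1)) W \<omega> = \<psi> (\<xi> (k + 1) \<omega>)"
  shows "AE \<omega> in M. real_cond_exp M (\<F> k) W \<omega> = transition_op \<psi> (\<xi> k \<omega>)"
proof -
  interpret sigma_finite_subalgebra M "\<F> k" by (rule sigma_finite_past)
  have [measurable]: "W \<in> borel_measurable M" using W by (rule borel_measurable_integrable)
  have "AE \<omega> in M. real_cond_exp M (\<F> k) (real_cond_exp M (\<F> (k + 1)) W) \<omega> = real_cond_exp M (\<F> k) W \<omega>"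
    by (intro real_cond_exp_nested_subalg subalgebra_past past_mono W) simp
  moreover have "AE \<omega> in M. real_cond_exp M (\<F> k) (real_cond_exp M (\<F> (k + 1)) W) \<omega>
      = real_cond_exp M (\<F> k) (\<lambda>\<omega>. \<psi> (\<xi> (k + 1) \<omega>)) \<omega>"
    by (rule real_cond_exp_cong) (use next_eq in auto)
  moreover have "AE \<omega> in M. real_cond_exp M (\<F> k) (\<lambda>\<omega>. \<psi> (\<xi> (k + 1) \<omega>)) \<omega> = transition_op \<psi> (\<xi> k \<omega>)"
    by (rule cond_exp_past_next[OF \<psi> int_\<psi>])
  ultimately show ?thesis by auto
qed

lemma cond_exp_past_ahead:
  fixes \<phi> :: "'s \<Rightarrow> real"
  assumes \<phi>[measurable]: "\<phi> \<in> borel_measurable S" and int_\<phi>: "integrable \<pi> \<phi>"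
  shows "AE \<omega> in M. real_cond_exp M (\<F> k) (\<lambda>\<omega>. \<phi> (\<xi> (k + int m) \<omega>)) \<omega> = (transition_op ^^ m) \<phi> (\<xi> k \<omega>)"
proof (induction m arbitrary: k)
  case 0
  have "AE \<omega> in M. real_cond_exp M (\<F> k) (\<lambda>\<omega>. \<phi> (\<xi> k \<omega>)) \<omega> = \<phi> (\<xi> k \<omega>)"
    using int_\<phi> by (intro sigma_finite_subalgebra.real_cond_exp_F_meas[OF sigma_finite_past])
      (simp_all add: integrable_xi_iff measurable_compose[OF measurable_xi_past])
  then show ?case by simp
next
  case (Suc m)
  have "AE \<omega> in M. real_cond_exp M (\<F> k) (\<lambda>\<omega>. \<phi> (\<xi> (k + 1 + int m) \<omega>)) \<omega>
      = transition_op ((transition_op ^^ m) \<phi>) (\<xi> k \<omega>)"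
    using int_\<phi> Suc.IH[of "k + 1"]
    by (intro cond_exp_past_via_next) (simp_all add: integrable_xi_iff integrable_transition_op_iter)
  then show ?case by (simp add: ac_simps)
qed

lemma Lp_norm_xi:
  fixes w :: "'s \<Rightarrow> real"
  assumes [measurable]: "w \<in> borel_measurable S"
  shows "Lp_norm M p (\<lambda>\<omega>. w (\<xi> j \<omega>)) = Lp_norm M p (\<lambda>\<omega>. w (\<xi> 0 \<omega>))"
  unfolding Lp_norm_def using integral_xi[of "\<lambda>x. \<bar>w x\<bar> powr p"] by simp

lemma Lp_integrable_xi_iff:
  fixes w :: "'s \<Rightarrow> real"
  assumes [measurable]: "w \<in> borel_measurable S"
  shows "Lp_integrable M p (\<lambda>\<omega>. w (\<xi> j \<omega>)) \<longleftrightarrow> integrable \<pi> (\<lambda>x. \<bar>w x\<bar> powr p)"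
  unfolding Lp_integrable_def using integrable_xi_iff[of "\<lambda>x. \<bar>w x\<bar> powr p" j] by simp

section \<open>The backward Markov property\<close>

lemma integral_times_next:
  fixes u v :: "'s \<Rightarrow> real"
  assumes [measurable]: "u \<in> borel_measurable S" "v \<in> borel_measurable S" and int_v: "integrable \<pi> v"
    and int_uv: "integrable M (\<lambda>\<omega>. u (\<xi> k \<omega>) * v (\<xi> (k+1) \<omega>))"
  shows "(\<integral>\<omega>. u (\<xi> k \<omega>) * v (\<xi> (k+1) \<omega>) \<partial>M) = (\<integral>\<omega>. u (\<xi> k \<omega>) * transition_op v (\<xi> k \<omega>) \<partial>M)"
proof -
  interpret sigma_finite_subalgebra M "\<F> k" by (rule sigma_finite_past)
  have u_past: "(\<lambda>\<omega>. u (\<xi> k \<omega>)) \<in> borel_measurable (\<F> k)"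
    by (rule measurable_compose[OF measurable_xi_past]) auto
  have "(\<integral>\<omega>. u (\<xi> k \<omega>) * v (\<xi> (k+1) \<omega>) \<partial>M)
      = (\<integral>\<omega>. u (\<xi> k \<omega>) * real_cond_exp M (\<F> k) (\<lambda>\<omega>. v (\<xi> (k+1) \<omega>)) \<omega> \<partial>M)"
    by (rule real_cond_exp_intg(2)[symmetric, OF int_uv u_past]) measurable
  also have "\<dots> = (\<integral>\<omega>. u (\<xi> k \<omega>) * transition_op v (\<xi> k \<omega>) \<partial>M)"
    by (rule integral_cong_AE) (use cond_exp_past_next[OF assms(2) int_v, of k] in auto)
  finally show ?thesis .
qed

text \<open>The only use of reversibility: the law of \<open>(\<xi> 0, \<xi> 1)\<close> is symmetric, so the
  transition operator is self-adjoint with respect to \<open>\<pi>\<close>.\<close>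
lemma integral_times_next_reversed:
  fixes \<phi> \<psi> :: "'s \<Rightarrow> real"
  assumes \<phi>[measurable]: "\<phi> \<in> borel_measurable S" and int_\<phi>: "integrable \<pi> \<phi>"
    and \<psi>[measurable]: "\<psi> \<in> borel_measurable S" and bound: "\<And>x. x \<in> space S \<Longrightarrow> \<bar>\<psi> x\<bar> \<le> c"
  shows "(\<integral>\<omega>. \<phi> (\<xi> i \<omega>) * \<psi> (\<xi> (i+1) \<omega>) \<partial>M)
       = (\<integral>\<omega>. transition_op \<phi> (\<xi> (i+1) \<omega>) * \<psi> (\<xi> (i+1) \<omega>) \<partial>M)"
proof -
  have int_\<psi>: "integrable \<pi> \<psi>" by (rule integrable_pi_bounded[OF \<psi> bound])
  have int_prod: "integrable M (\<lambda>\<omega>. \<phi> (\<xi> k \<omega>) * \<psi> (\<xi> j \<omega>))"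
    and int_prod': "integrable M (\<lambda>\<omega>. \<psi> (\<xi> j \<omega>) * \<phi> (\<xi> k \<omega>))" for k j
    using integrable_mult_bounded[of M "\<lambda>\<omega>. \<phi> (\<xi> k \<omega>)" "\<lambda>\<omega>. \<psi> (\<xi> j \<omega>)" c] int_\<phi>
    by (auto simp: integrable_xi_iff mult.commute intro!: bound measurable_space[OF measurable_xi])
  have [measurable]: "transition_op \<phi> \<in> borel_measurable S" "transition_op \<psi> \<in> borel_measurable S"
    by simp_all
  have "(\<integral>\<omega>. \<phi> (\<xi> i \<omega>) * \<psi> (\<xi> (i+1) \<omega>) \<partial>M) = (\<integral>\<omega>. \<phi> (\<xi> i \<omega>) * transition_op \<psi> (\<xi> i \<omega>) \<partial>M)"
    by (rule integral_times_next[OF \<phi> \<psi> int_\<psi> int_prod])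
  also have "\<dots> = (\<integral>\<omega>. \<phi> (\<xi> 0 \<omega>) * transition_op \<psi> (\<xi> 0 \<omega>) \<partial>M)"
    using integral_xi[of "\<lambda>x. \<phi> x * transition_op \<psi> x"] by simp
  also have "\<dots> = (\<integral>\<omega>. \<phi> (\<xi> 0 \<omega>) * \<psi> (\<xi> 1 \<omega>) \<partial>M)"
    using integral_times_next[OF \<phi> \<psi> int_\<psi> int_prod, of 0] by simp
  also have "\<dots> = (\<integral>z. \<phi> (fst z) * \<psi> (snd z) \<partial>distr M (S \<Otimes>\<^sub>M S) (\<lambda>\<omega>. (\<xi> 0 \<omega>, \<xi> 1 \<omega>)))"
    by (subst integral_distr) auto
  also have "\<dots> = (\<integral>\<omega>. \<psi> (\<xi> 0 \<omega>) * \<phi> (\<xi> 1 \<omega>) \<partial>M)"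
    unfolding reversible by (subst integral_distr) (auto simp: mult.commute)
  also have "\<dots> = (\<integral>\<omega>. \<psi> (\<xi> 0 \<omega>) * transition_op \<phi> (\<xi> 0 \<omega>) \<partial>M)"
    using integral_times_next[OF \<psi> \<phi> int_\<phi> int_prod', of 0] by simp
  also have "\<dots> = (\<integral>\<omega>. \<psi> (\<xi> (i+1) \<omega>) * transition_op \<phi> (\<xi> (i+1) \<omega>) \<partial>M)"
    using integral_xi[of "\<lambda>x. \<psi> x * transition_op \<phi> x"] by simp
  finally show ?thesis by (simp add: mult.commute)
qed

definition cylinder_indicator :: "int \<Rightarrow> nat \<Rightarrow> (nat \<Rightarrow> 's set) \<Rightarrow> 'a \<Rightarrow> real" where
  "cylinder_indicator i N B \<omega> = (\<Prod>j<N. indicator (B j) (\<xi> (i + int j) \<omega>))"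

lemma measurable_cylinder_indicator[measurable]:
  "(\<And>j. j < N \<Longrightarrow> B j \<in> sets S) \<Longrightarrow> cylinder_indicator i N B \<in> borel_measurable M"
  unfolding cylinder_indicator_def
  by (intro borel_measurable_prod) (auto intro!: borel_measurable_indicator measurable_compose[OF measurable_xi])

lemma abs_cylinder_indicator_le: "\<bar>cylinder_indicator i N B \<omega>\<bar> \<le> 1"
proof -
  have "0 \<le> cylinder_indicator i N B \<omega> \<and> cylinder_indicator i N B \<omega> \<le> 1"
    unfolding cylinder_indicator_def by (auto intro!: prod_nonneg prod_le_1)
  then show ?thesis by simp
qed

lemma cylinder_indicator_Suc:
  "cylinder_indicator i (Suc N) B \<omega> = indicator (B 0) (\<xi> i \<omega>) * cylinder_indicator (i + 1) N (\<lambda>j. B (Suc j)) \<omega>"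
  unfolding cylinder_indicator_def prod.lessThan_Suc_shift by (simp add: ac_simps)

lemma integrable_cylinder_indicator:
  "(\<And>j. j < N \<Longrightarrow> B j \<in> sets S) \<Longrightarrow> integrable M (cylinder_indicator i N B)"
  using abs_cylinder_indicator_le by (intro integrable_const_bound[where B=1]) auto

lemma cond_exp_past_cylinder_indicator:
  assumes "\<And>j. j < N \<Longrightarrow> B j \<in> sets S"
  shows "\<exists>\<psi>. \<psi> \<in> borel_measurable S \<and> (\<forall>x\<in>space S. \<bar>\<psi> x\<bar> \<le> 1) \<and>
     (AE \<omega> in M. real_cond_exp M (\<F> i) (cylinder_indicator i N B) \<omega> = \<psi> (\<xi> i \<omega>))"
  using assms
proof (induction N arbitrary: i B)
  case 0
  interpret sigma_finite_subalgebra M "\<F> i" by (rule sigma_finite_past)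
  have "cylinder_indicator i 0 B = (\<lambda>_. 1)" unfolding cylinder_indicator_def by auto
  then show ?case by (intro exI[of _ "\<lambda>_. 1"]) auto
next
  case (Suc N)
  interpret sigma_finite_subalgebra M "\<F> i" by (rule sigma_finite_past)
  define B' where "B' j = B (Suc j)" for j
  let ?W = "cylinder_indicator (i + 1) N B'"
  have B'[measurable]: "j < N \<Longrightarrow> B' j \<in> sets S" for j using Suc.prems by (simp add: B'_def)
  have [measurable]: "B 0 \<in> sets S" using Suc.prems by simp
  obtain \<psi> where \<psi>[measurable]: "\<psi> \<in> borel_measurable S" and bound: "\<forall>x\<in>space S. \<bar>\<psi> x\<bar> \<le> 1"
    and ae_\<psi>: "AE \<omega> in M. real_cond_exp M (\<F> (i + 1)) ?W \<omega> = \<psi> (\<xi> (i + 1) \<omega>)"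
    using Suc.IH[of B' "i + 1"] B' by blast
  have "AE \<omega> in M. real_cond_exp M (\<F> i) ?W \<omega> = transition_op \<psi> (\<xi> i \<omega>)"
    using ae_\<psi> bound B'
    by (intro cond_exp_past_via_next integrable_cylinder_indicator integrable_pi_bounded[of _ 1]) auto
  moreover have "AE \<omega> in M. real_cond_exp M (\<F> i) (\<lambda>\<omega>. indicator (B 0) (\<xi> i \<omega>) * ?W \<omega>) \<omega>
      = indicator (B 0) (\<xi> i \<omega>) * real_cond_exp M (\<F> i) ?W \<omega>"
  proof (rule real_cond_exp_mult)
    show "(\<lambda>\<omega>. indicator (B 0) (\<xi> i \<omega>) :: real) \<in> borel_measurable (\<F> i)"
      by (rule measurable_compose[OF measurable_xi_past]) auto
    show "integrable M (\<lambda>\<omega>. indicator (B 0) (\<xi> i \<omega>) * ?W \<omega>)"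
      using abs_cylinder_indicator_le
      by (intro integrable_const_bound[where B=1]) (auto simp: indicator_def)
  qed measurable
  ultimately have "AE \<omega> in M. real_cond_exp M (\<F> i) (cylinder_indicator i (Suc N) B) \<omega>
      = indicator (B 0) (\<xi> i \<omega>) * transition_op \<psi> (\<xi> i \<omega>)"
    by (auto simp: cylinder_indicator_Suc[abs_def] B'_def[symmetric])
  moreover have "\<forall>x\<in>space S. \<bar>indicator (B 0) x * transition_op \<psi> x\<bar> \<le> 1"
    using abs_transition_op_le[OF \<psi>, of 1] bound by (auto simp: indicator_def)
  ultimately show ?case
    by (intro exI[of _ "\<lambda>x. indicator (B 0) x * transition_op \<psi> x"]) auto
qed

lemma integral_times_cylinder_indicator_reversed:
  fixes \<phi> :: "'s \<Rightarrow> real"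
  assumes \<phi>[measurable]: "\<phi> \<in> borel_measurable S" and int_\<phi>: "integrable \<pi> \<phi>"
    and B: "\<And>j. j < N \<Longrightarrow> B j \<in> sets S"
  shows "(\<integral>\<omega>. \<phi> (\<xi> i \<omega>) * cylinder_indicator (i + 1) N B \<omega> \<partial>M)
       = (\<integral>\<omega>. transition_op \<phi> (\<xi> (i + 1) \<omega>) * cylinder_indicator (i + 1) N B \<omega> \<partial>M)"
proof -
  interpret sigma_finite_subalgebra M "\<F> (i + 1)" by (rule sigma_finite_past)
  let ?W = "cylinder_indicator (i + 1) N B"
  obtain \<psi> where \<psi>[measurable]: "\<psi> \<in> borel_measurable S" and bound: "\<forall>x\<in>space S. \<bar>\<psi> x\<bar> \<le> 1"
    and ae_\<psi>: "AE \<omega> in M. real_cond_exp M (\<F> (i + 1)) ?W \<omega> = \<psi> (\<xi> (i + 1) \<omega>)"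
    using cond_exp_past_cylinder_indicator[of N B "i + 1"] B by blast
  have [measurable]: "?W \<in> borel_measurable M" using B by measurable
  have int_P\<phi>: "integrable \<pi> (transition_op \<phi>)" by (rule integrable_transition_op[OF \<phi> int_\<phi>])
  have integrable_times_W: "integrable M (\<lambda>\<omega>. w (\<xi> j \<omega>) * ?W \<omega>)"
    if "w \<in> borel_measurable S" "integrable \<pi> w" for w j
    using that abs_cylinder_indicator_le
    by (intro integrable_mult_bounded[where c=1]) (auto simp: integrable_xi_iff)
  have "(\<integral>\<omega>. \<phi> (\<xi> i \<omega>) * ?W \<omega> \<partial>M) = (\<integral>\<omega>. \<phi> (\<xi> i \<omega>) * real_cond_exp M (\<F> (i + 1)) ?W \<omega> \<partial>M)"
    using integrable_times_W[OF \<phi> int_\<phi>]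
    by (intro real_cond_exp_intg(2)[symmetric] measurable_compose[OF measurable_xi_past \<phi>]) auto
  also have "\<dots> = (\<integral>\<omega>. \<phi> (\<xi> i \<omega>) * \<psi> (\<xi> (i + 1) \<omega>) \<partial>M)"
    by (rule integral_cong_AE) (use ae_\<psi> in auto)
  also have "\<dots> = (\<integral>\<omega>. transition_op \<phi> (\<xi> (i + 1) \<omega>) * \<psi> (\<xi> (i + 1) \<omega>) \<partial>M)"
    by (rule integral_times_next_reversed[OF \<phi> int_\<phi> \<psi>]) (use bound in auto)
  also have "\<dots> = (\<integral>\<omega>. transition_op \<phi> (\<xi> (i + 1) \<omega>) * real_cond_exp M (\<F> (i + 1)) ?W \<omega> \<partial>M)"
    by (rule integral_cong_AE) (use ae_\<psi> in auto)
  also have "\<dots> = (\<integral>\<omega>. transition_op \<phi> (\<xi> (i + 1) \<omega>) * ?W \<omega> \<partial>M)"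
    using integrable_times_W[OF _ int_P\<phi>]
    by (intro real_cond_exp_intg(2) measurable_compose[OF measurable_xi_past]) auto
  finally show ?thesis .
qed

definition cylinders :: "int \<Rightarrow> 'a set set" where
  "cylinders i = {{\<omega>\<in>space M. \<forall>j<N. \<xi> (i + int j) \<omega> \<in> B j} | N B. \<forall>j<N. B j \<in> sets S}"

lemma indicator_cylinder:
  "\<omega> \<in> space M \<Longrightarrow> indicator {\<omega>\<in>space M. \<forall>j<N. \<xi> (i + int j) \<omega> \<in> B j} \<omega> = cylinder_indicator i N B \<omega>"
  by (auto simp: cylinder_indicator_def indicator_def)

lemma Int_stable_cylinders: "Int_stable (cylinders i)"
proof (rule Int_stableI)
  fix a b assume "a \<in> cylinders i" "b \<in> cylinders i"
  then obtain N\<^sub>1 B\<^sub>1 N\<^sub>2 B\<^sub>2 where a: "a = {\<omega>\<in>space M. \<forall>j<N\<^sub>1. \<xi> (i + int j) \<omega> \<in> B\<^sub>1 j}" "\<forall>j<N\<^sub>1. B\<^sub>1 j \<in> sets S"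
    and b: "b = {\<omega>\<in>space M. \<forall>j<N\<^sub>2. \<xi> (i + int j) \<omega> \<in> B\<^sub>2 j}" "\<forall>j<N\<^sub>2. B\<^sub>2 j \<in> sets S"
    unfolding cylinders_def by blast
  define B where "B j = (if j < N\<^sub>1 then B\<^sub>1 j else space S) \<inter> (if j < N\<^sub>2 then B\<^sub>2 j else space S)" for j
  have "\<forall>j<max N\<^sub>1 N\<^sub>2. B j \<in> sets S" using a(2) b(2) by (auto simp: B_def)
  moreover have "a \<inter> b = {\<omega>\<in>space M. \<forall>j<max N\<^sub>1 N\<^sub>2. \<xi> (i + int j) \<omega> \<in> B j}"
    unfolding a b B_def using measurable_space[OF measurable_xi] by (auto simp: less_max_iff_disj)
  ultimately show "a \<inter> b \<in> cylinders i" unfolding cylinders_def by blast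
qed

lemma space_in_cylinders: "space M \<in> cylinders i"
  unfolding cylinders_def by (intro CollectI exI[of _ 0]) auto

lemma sigma_sets_cylinders: "sigma_sets (space M) (cylinders i) = sets (\<G> i)"
proof
  have "A \<in> sets (\<G> i)" if cyl: "A \<in> cylinders i" for A
  proof -
    obtain N B where A: "A = {\<omega>\<in>space M. \<forall>j<N. \<xi> (i + int j) \<omega> \<in> B j}" and B: "\<forall>j<N. B j \<in> sets S"
      using cyl unfolding cylinders_def by blast
    have "\<xi> (i + int j) -` B j \<inter> space M \<in> sets (\<G> i)" if "j < N" for j
      using measurable_sets[OF measurable_xi_future[of i "i + int j"], of "B j"] B that by simp
    then have "space M \<inter> (\<Inter>j<N. \<xi> (i + int j) -` B j \<inter> space M) \<in> sets (\<G> i)"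
    proof (cases "N = 0")
      case False
      then have "(\<Inter>j<N. \<xi> (i + int j) -` B j \<inter> space M) \<in> sets (\<G> i)"
        using \<open>\<And>j. j < N \<Longrightarrow> _\<close> by (intro sets.finite_INT) auto
      then show ?thesis using sets.top[of "\<G> i"] by (metis sets.Int space_future)
    qed (use sets.top[of "\<G> i"] in simp)
    moreover have "A = space M \<inter> (\<Inter>j<N. \<xi> (i + int j) -` B j \<inter> space M)" unfolding A by auto
    ultimately show ?thesis by simp
  qed
  then show "sigma_sets (space M) (cylinders i) \<subseteq> sets (\<G> i)"
    using sets.sigma_sets_subset[of "cylinders i" "\<G> i"] by auto
  show "sets (\<G> i) \<subseteq> sigma_sets (space M) (cylinders i)"
    unfolding sets_future
  proof (intro sigma_sets_mono subsetI, safe)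
    fix k A assume k: "i \<le> k" and A: "A \<in> sets S"
    define B where "B j = (if j = nat (k - i) then A else space S)" for j
    have "\<xi> k -` A \<inter> space M = {\<omega>\<in>space M. \<forall>j<Suc (nat (k - i)). \<xi> (i + int j) \<omega> \<in> B j}"
      using measurable_space[OF measurable_xi] k by (auto simp: B_def less_Suc_eq_le)
    moreover have "\<forall>j<Suc (nat (k - i)). B j \<in> sets S" using A by (auto simp: B_def)
    ultimately show "\<xi> k -` A \<inter> space M \<in> sigma_sets (space M) (cylinders i)"
      unfolding cylinders_def by blast
  qed
qed

text \<open>Cylinders are an \<open>Int\<close>-stable generator of the future, so it suffices to compare
  integrals over cylinders, where reversibility applies.\<close>
lemma cond_exp_future_prev:
  fixes \<phi> :: "'s \<Rightarrow> real"
  assumes \<phi>[measurable]: "\<phi> \<in> borel_measurable S" and int_\<phi>: "integrable \<pi> \<phi>"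
  shows "AE \<omega> in M. real_cond_exp M (\<G> (i + 1)) (\<lambda>\<omega>. \<phi> (\<xi> i \<omega>)) \<omega> = transition_op \<phi> (\<xi> (i + 1) \<omega>)"
proof (rule sigma_finite_subalgebra.real_cond_exp_charact[OF sigma_finite_future])
  show int_\<phi>\<xi>: "integrable M (\<lambda>\<omega>. \<phi> (\<xi> i \<omega>))"
    using int_\<phi> by (simp add: integrable_xi_iff)
  show int_P\<phi>: "integrable M (\<lambda>\<omega>. transition_op \<phi> (\<xi> (i + 1) \<omega>))"
    using integrable_transition_op[OF \<phi> int_\<phi>] by (simp add: integrable_xi_iff)
  show "(\<lambda>\<omega>. transition_op \<phi> (\<xi> (i + 1) \<omega>)) \<in> borel_measurable (\<G> (i + 1))"
    by (rule measurable_compose[OF measurable_xi_future]) auto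
  have on_cylinders: "(\<integral>\<omega>\<in>A. \<phi> (\<xi> i \<omega>) \<partial>M) = (\<integral>\<omega>\<in>A. transition_op \<phi> (\<xi> (i + 1) \<omega>) \<partial>M)"
    if cyl: "A \<in> cylinders (i + 1)" for A
  proof -
    obtain N B where A: "A = {\<omega>\<in>space M. \<forall>j<N. \<xi> (i + 1 + int j) \<omega> \<in> B j}" and B: "\<forall>j<N. B j \<in> sets S"
      using cyl unfolding cylinders_def by blast
    have "(\<integral>\<omega>\<in>A. \<phi> (\<xi> i \<omega>) \<partial>M) = (\<integral>\<omega>. \<phi> (\<xi> i \<omega>) * cylinder_indicator (i + 1) N B \<omega> \<partial>M)"
      unfolding set_lebesgue_integral_def A
      by (intro Bochner_Integration.integral_cong) (auto simp: indicator_cylinder)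
    also have "\<dots> = (\<integral>\<omega>. transition_op \<phi> (\<xi> (i + 1) \<omega>) * cylinder_indicator (i + 1) N B \<omega> \<partial>M)"
      by (rule integral_times_cylinder_indicator_reversed[OF \<phi> int_\<phi>]) (use B in auto)
    also have "\<dots> = (\<integral>\<omega>\<in>A. transition_op \<phi> (\<xi> (i + 1) \<omega>) \<partial>M)"
      unfolding set_lebesgue_integral_def A
      by (intro Bochner_Integration.integral_cong) (auto simp: indicator_cylinder)
    finally show ?thesis .
  qed
  fix A assume "A \<in> sets (\<G> (i + 1))"
  then have "A \<in> sigma_sets (space M) (cylinders (i + 1))" by (simp add: sigma_sets_cylinders)
  moreover have "cylinders (i + 1) \<subseteq> Pow (space M)" by (auto simp: cylinders_def)
  moreover have "sigma_sets (space M) (cylinders (i + 1)) \<subseteq> sets M"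
    using subalgebra_future[of "i + 1"] by (simp add: sigma_sets_cylinders subalgebra_def)
  ultimately show "(\<integral>\<omega>\<in>A. \<phi> (\<xi> i \<omega>) \<partial>M) = (\<integral>\<omega>\<in>A. transition_op \<phi> (\<xi> (i + 1) \<omega>) \<partial>M)"
    using set_integral_eq_on_sigma_sets[OF Int_stable_cylinders _ space_in_cylinders _ int_\<phi>\<xi> int_P\<phi> on_cylinders]
    by blast
qed

end

section \<open>The martingale decomposition\<close>

lemma sum_int_atLeastAtMost_shift:
  fixes g :: "int \<Rightarrow> 'a::comm_monoid_add"
  shows "(\<Sum>j\<in>{k..k + int i}. g j) = (\<Sum>m\<le>i. g (k + int m))"
proof -
  have "{k..k + int i} = (\<lambda>m. k + int m) ` {..i}"
  proof
    show "{k..k + int i} \<subseteq> (\<lambda>m. k + int m) ` {..i}"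
    proof
      fix j assume "j \<in> {k..k + int i}"
      then have "j = k + int (nat (j - k))" "nat (j - k) \<le> i" by auto
      then show "j \<in> (\<lambda>m. k + int m) ` {..i}" by blast
    qed
  qed auto
  moreover have "inj_on (\<lambda>m. k + int m) {..i}" by (auto simp: inj_on_def)
  ultimately show ?thesis by (simp add: sum.reindex)
qed

lemma sum_int_atLeastAtMost_of_nat:
  fixes g :: "int \<Rightarrow> 'a::comm_monoid_add"
  shows "(\<Sum>j\<in>{1..int k}. g j) = (\<Sum>i\<in>{1..k}. g (int i))"
proof -
  have "{1..int k} = int ` {1..k}"
  proof
    show "{1..int k} \<subseteq> int ` {1..k}"
    proof
      fix j assume "j \<in> {1..int k}"
      then have "j = int (nat j)" "nat j \<in> {1..k}" by auto
      then show "j \<in> int ` {1..k}" by blast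
    qed
  qed auto
  then show ?thesis by (simp add: sum.reindex)
qed

lemma sum_int_atLeastAtMost_diff:
  fixes g :: "int \<Rightarrow> 'a::ab_group_add"
  assumes "0 \<le> j"
  shows "(\<Sum>l\<in>{1..int i + j}. g l) - (\<Sum>l\<in>{1..j}. g l) = (\<Sum>m\<in>{1..i}. g (j + int m))"
proof (induction i)
  case (Suc i)
  have "{1..int (Suc i) + j} = insert (j + int i + 1) {1..int i + j}" using assms by auto
  then show ?case using Suc by (simp add: algebra_simps)
qed simp

text \<open>The algebra behind the decomposition: \<open>a = b + u - c\<close> stands for
  \<open>h = h' + f - pred_sum n / n\<close> evaluated along the chain.\<close>
lemma sum_decomposition_telescope:
  fixes a b u c :: "nat \<Rightarrow> real"
  assumes "\<And>i. a i = b i + u i - c i"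
  shows "(\<Sum>i\<in>{1..k}. a i - b (i - 1)) + (\<Sum>i<k. a i - b (Suc i)) + (u k - u 0)
           + (\<Sum>i\<in>{1..k}. c (i - 1) + c i) = 2 * (\<Sum>i\<in>{1..k}. u i)"
proof (induction k)
  case (Suc k)
  then show ?case using assms[of k] assms[of "Suc k"] by (simp add: algebra_simps)
qed simp

lemma sum_forward_telescope:
  fixes a b u c :: "nat \<Rightarrow> real"
  assumes "\<And>i. a i = b i + u i - c i"
  shows "(\<Sum>i\<in>{1..k}. a i - b (i - 1)) = (\<Sum>i\<in>{1..k}. u i) - (\<Sum>i\<in>{1..k}. c i) + b k - b 0"
proof (induction k)
  case (Suc k)
  then show ?case using assms[of "Suc k"] by (simp add: algebra_simps)
qed simp

locale reversible_markov_functional = reversible_markov_chain M S \<pi> Q \<xi>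
  for M :: "'a measure" and S :: "'s measure" and \<pi> Q \<xi> +
  fixes f :: "'s \<Rightarrow> real" and n :: nat
  assumes measurable_f[measurable]: "f \<in> borel_measurable S"
    and integrable_f: "integrable \<pi> f"
    and n_pos: "1 \<le> n"
begin

text \<open>\<open>Pf m\<close> is \<open>P\<^sup>m f\<close>, \<open>pred_sum i (\<xi> j)\<close> is a version of \<open>E\<^sub>j (S\<^sub>j\<^sub>+\<^sub>i - S\<^sub>j)\<close>, and \<open>h (\<xi> k)\<close>,
  \<open>h' (\<xi> (k - 1))\<close> are versions of \<open>\<theta>\<^sub>k\<close> and \<open>E\<^sub>k\<^sub>-\<^sub>1 \<theta>\<^sub>k\<close>.\<close>

definition Pf :: "nat \<Rightarrow> 's \<Rightarrow> real" where
  "Pf m = (transition_op ^^ m) f"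

definition pred_sum :: "nat \<Rightarrow> 's \<Rightarrow> real" where
  "pred_sum i x = (\<Sum>m\<in>{1..i}. Pf m x)"

definition h :: "'s \<Rightarrow> real" where
  "h x = (1 / real n) * (\<Sum>i<n. \<Sum>m\<le>i. Pf m x)"

definition h' :: "'s \<Rightarrow> real" where
  "h' x = (1 / real n) * (\<Sum>i<n. \<Sum>m\<le>i. Pf (Suc m) x)"

definition partial_sum :: "int \<Rightarrow> 'a \<Rightarrow> real" where
  "partial_sum k = (\<lambda>\<omega>. \<Sum>i\<in>{1..k}. f (\<xi> i \<omega>))"

definition theta :: "int \<Rightarrow> 'a \<Rightarrow> real" where
  "theta k = (\<lambda>\<omega>. (1 / real n) *
     (\<Sum>i<n. real_cond_exp M (\<F> k) (\<lambda>\<omega>'. \<Sum>j\<in>{k..k + int i}. f (\<xi> j \<omega>')) \<omega>))"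

definition mart_diff :: "int \<Rightarrow> 'a \<Rightarrow> real" where
  "mart_diff k = (\<lambda>\<omega>. theta k \<omega> - real_cond_exp M (\<F> (k - 1)) (theta k) \<omega>)"

definition rev_mart_diff :: "int \<Rightarrow> 'a \<Rightarrow> real" where
  "rev_mart_diff k = (\<lambda>\<omega>. theta k \<omega> - real_cond_exp M (\<G> (k + 1)) (theta k) \<omega>)"

definition mart :: "nat \<Rightarrow> 'a \<Rightarrow> real" where
  "mart k = (\<lambda>\<omega>. \<Sum>i\<in>{1..k}. mart_diff (int i) \<omega>)"

definition rev_mart :: "nat \<Rightarrow> 'a \<Rightarrow> real" where
  "rev_mart k = (\<lambda>\<omega>. \<Sum>i<k. rev_mart_diff (int i) \<omega>)"

definition remainder :: "nat \<Rightarrow> 'a \<Rightarrow> real" where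
  "remainder k = (\<lambda>\<omega>. (1 / real n) * (\<Sum>i\<in>{1..k}.
      real_cond_exp M (\<F> (int i - 1)) (\<lambda>\<omega>'. partial_sum (int n + int i - 1) \<omega>' - partial_sum (int i - 1) \<omega>') \<omega>
    + real_cond_exp M (\<F> (int i)) (\<lambda>\<omega>'. partial_sum (int n + int i) \<omega>' - partial_sum (int i) \<omega>') \<omega>))"

lemma measurable_Pf[measurable]: "Pf m \<in> borel_measurable S"
  and integrable_Pf: "integrable \<pi> (Pf m)"
  unfolding Pf_def by (simp_all add: integrable_transition_op_iter integrable_f)

lemma Pf_0: "Pf 0 = f" and transition_op_Pf: "transition_op (Pf m) = Pf (Suc m)"
  by (simp_all add: Pf_def)

lemma cond_exp_past_f_ahead:
  "AE \<omega> in M. real_cond_exp M (\<F> k) (\<lambda>\<omega>. f (\<xi> (k + int m) \<omega>)) \<omega> = Pf m (\<xi> k \<omega>)"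
  unfolding Pf_def by (rule cond_exp_past_ahead[OF measurable_f integrable_f])

lemma measurable_h[measurable]: "h \<in> borel_measurable S"
  and measurable_h'[measurable]: "h' \<in> borel_measurable S"
  and measurable_pred_sum[measurable]: "pred_sum i \<in> borel_measurable S"
  unfolding h_def h'_def pred_sum_def by measurable

lemma integrable_h: "integrable \<pi> h"
  unfolding h_def using integrable_Pf by auto

lemma integrable_f_xi: "integrable M (\<lambda>\<omega>. f (\<xi> j \<omega>))"
  using integrable_f by (simp add: integrable_xi_iff)

lemma h_eq: "h x = h' x + f x - pred_sum n x / real n"
proof -
  have "(\<Sum>m\<le>i. Pf m x) = (\<Sum>m\<le>i. Pf (Suc m) x) + f x - Pf (Suc i) x" for i
    using sum_telescope[of "\<lambda>m. Pf m x" i] by (simp add: Pf_0 sum_subtractf)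
  then have "(\<Sum>i<n. \<Sum>m\<le>i. Pf m x) = (\<Sum>i<n. \<Sum>m\<le>i. Pf (Suc m) x) + real n * f x - (\<Sum>i<n. Pf (Suc i) x)"
    by (simp add: sum.distrib sum_subtractf)
  also have "(\<Sum>i<n. Pf (Suc i) x) = pred_sum n x"
    unfolding pred_sum_def by (simp add: sum.atLeast1_atMost_eq)
  finally have sums: "(\<Sum>i<n. \<Sum>m\<le>i. Pf m x) = (\<Sum>i<n. \<Sum>m\<le>i. Pf (Suc m) x) + real n * f x - pred_sum n x" .
  show ?thesis using n_pos unfolding h_def h'_def sums by (simp add: field_simps)
qed

lemma h'_eq_pred_sum: "h' x = (1 / real n) * (\<Sum>i<n. pred_sum (Suc i) x)"
  unfolding h'_def pred_sum_def One_nat_def sum.atLeast1_atMost_eq lessThan_Suc_atMost ..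

lemma cond_exp_past_block:
  "AE \<omega> in M. real_cond_exp M (\<F> k) (\<lambda>\<omega>'. \<Sum>j\<in>{k..k + int i}. f (\<xi> j \<omega>')) \<omega> = (\<Sum>m\<le>i. Pf m (\<xi> k \<omega>))"
proof -
  interpret sigma_finite_subalgebra M "\<F> k" by (rule sigma_finite_past)
  have "AE \<omega> in M. real_cond_exp M (\<F> k) (\<lambda>\<omega>'. \<Sum>j\<in>{k..k + int i}. f (\<xi> j \<omega>')) \<omega>
      = (\<Sum>j\<in>{k..k + int i}. real_cond_exp M (\<F> k) (\<lambda>\<omega>'. f (\<xi> j \<omega>')) \<omega>)"
    by (rule real_cond_exp_sum) (rule integrable_f_xi)
  moreover have "AE \<omega> in M. \<forall>m\<in>{..i}. real_cond_exp M (\<F> k) (\<lambda>\<omega>. f (\<xi> (k + int m) \<omega>)) \<omega> = Pf m (\<xi> k \<omega>)"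
    by (rule AE_finite_allI) (auto intro: cond_exp_past_f_ahead)
  ultimately show ?thesis by eventually_elim (simp add: sum_int_atLeastAtMost_shift)
qed

lemma theta_eq_h: "AE \<omega> in M. theta k \<omega> = h (\<xi> k \<omega>)"
proof -
  have "AE \<omega> in M. \<forall>i\<in>{..<n}. real_cond_exp M (\<F> k) (\<lambda>\<omega>'. \<Sum>j\<in>{k..k + int i}. f (\<xi> j \<omega>')) \<omega>
      = (\<Sum>m\<le>i. Pf m (\<xi> k \<omega>))"
    by (rule AE_finite_allI) (auto intro: cond_exp_past_block)
  then show ?thesis by eventually_elim (simp add: theta_def h_def)
qed

lemma measurable_theta_past: "theta k \<in> borel_measurable (\<F> k)"
  unfolding theta_def by measurable

lemma measurable_theta[measurable]: "theta k \<in> borel_measurable M"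
  by (rule measurable_from_subalg[OF subalgebra_past measurable_theta_past])

lemma integrable_theta: "integrable M (theta k)"
proof -
  interpret sigma_finite_subalgebra M "\<F> k" by (rule sigma_finite_past)
  show ?thesis unfolding theta_def
    by (intro integrable_mult_right Bochner_Integration.integrable_sum real_cond_exp_int(1)
        Bochner_Integration.integrable_sum integrable_f_xi)
qed

lemma cond_exp_past_h_next: "AE \<omega> in M. real_cond_exp M (\<F> j) (\<lambda>\<omega>. h (\<xi> (j + 1) \<omega>)) \<omega> = h' (\<xi> j \<omega>)"
proof -
  interpret sigma_finite_subalgebra M "\<F> j" by (rule sigma_finite_past)
  have int: "integrable M (\<lambda>\<omega>. Pf m (\<xi> (j + 1) \<omega>))" for m
    using integrable_Pf by (simp add: integrable_xi_iff)
  have "AE \<omega> in M. real_cond_exp M (\<F> j) (\<lambda>\<omega>. h (\<xi> (j + 1) \<omega>)) \<omega>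
      = (1 / real n) * real_cond_exp M (\<F> j) (\<lambda>\<omega>. \<Sum>l<n. \<Sum>m\<le>l. Pf m (\<xi> (j + 1) \<omega>)) \<omega>"
    unfolding h_def using int by (intro real_cond_exp_cmult) auto
  moreover have "AE \<omega> in M. real_cond_exp M (\<F> j) (\<lambda>\<omega>. \<Sum>l<n. \<Sum>m\<le>l. Pf m (\<xi> (j + 1) \<omega>)) \<omega>
      = (\<Sum>l<n. real_cond_exp M (\<F> j) (\<lambda>\<omega>. \<Sum>m\<le>l. Pf m (\<xi> (j + 1) \<omega>)) \<omega>)"
    using int by (intro real_cond_exp_sum) auto
  moreover have "AE \<omega> in M. \<forall>l\<in>{..<n}. real_cond_exp M (\<F> j) (\<lambda>\<omega>. \<Sum>m\<le>l. Pf m (\<xi> (j + 1) \<omega>)) \<omega>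
      = (\<Sum>m\<le>l. real_cond_exp M (\<F> j) (\<lambda>\<omega>. Pf m (\<xi> (j + 1) \<omega>)) \<omega>)"
    by (rule AE_finite_allI) (auto intro: int)
  moreover have "AE \<omega> in M. \<forall>m\<in>{..n}. real_cond_exp M (\<F> j) (\<lambda>\<omega>. Pf m (\<xi> (j + 1) \<omega>)) \<omega> = Pf (Suc m) (\<xi> j \<omega>)"
    by (rule AE_finite_allI)
      (use cond_exp_past_next[OF measurable_Pf integrable_Pf] in \<open>auto simp: transition_op_Pf\<close>)
  ultimately show ?thesis
  proof eventually_elim
    case (elim \<omega>)
    have "(\<Sum>l<n. \<Sum>m\<le>l. real_cond_exp M (\<F> j) (\<lambda>\<omega>. Pf m (\<xi> (j + 1) \<omega>)) \<omega>) = (\<Sum>l<n. \<Sum>m\<le>l. Pf (Suc m) (\<xi> j \<omega>))"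
      using elim(4) by (intro sum.cong refl) auto
    then show ?case using elim(1-3) by (simp add: h'_def)
  qed
qed

lemma cond_exp_past_theta: "AE \<omega> in M. real_cond_exp M (\<F> (k - 1)) (theta k) \<omega> = h' (\<xi> (k - 1) \<omega>)"
proof -
  interpret sigma_finite_subalgebra M "\<F> (k - 1)" by (rule sigma_finite_past)
  have "AE \<omega> in M. real_cond_exp M (\<F> (k - 1)) (theta k) \<omega>
      = real_cond_exp M (\<F> (k - 1)) (\<lambda>\<omega>. h (\<xi> (k - 1 + 1) \<omega>)) \<omega>"
    by (rule real_cond_exp_cong) (use theta_eq_h[of k] in auto)
  then show ?thesis using cond_exp_past_h_next[of "k - 1"] by auto
qed

text \<open>Backwards, \<open>E(\<theta>\<^sub>k | \<G>\<^sub>k\<^sub>+\<^sub>1)\<close> is \<open>transition_op h (\<xi>\<^sub>k\<^sub>+\<^sub>1)\<close>; this agrees with \<open>h' (\<xi>\<^sub>k\<^sub>+\<^sub>1)\<close>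
  because both are versions of \<open>E(h(\<xi>\<^sub>k\<^sub>+\<^sub>2) | \<F>\<^sub>k\<^sub>+\<^sub>1)\<close>.\<close>
lemma cond_exp_future_theta: "AE \<omega> in M. real_cond_exp M (\<G> (k + 1)) (theta k) \<omega> = h' (\<xi> (k + 1) \<omega>)"
proof -
  interpret future: sigma_finite_subalgebra M "\<G> (k + 1)" by (rule sigma_finite_future)
  have "AE \<omega> in M. real_cond_exp M (\<G> (k + 1)) (theta k) \<omega> = real_cond_exp M (\<G> (k + 1)) (\<lambda>\<omega>. h (\<xi> k \<omega>)) \<omega>"
    by (rule future.real_cond_exp_cong) (use theta_eq_h[of k] in auto)
  moreover have "AE \<omega> in M. real_cond_exp M (\<G> (k + 1)) (\<lambda>\<omega>. h (\<xi> k \<omega>)) \<omega> = transition_op h (\<xi> (k + 1) \<omega>)"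
    by (rule cond_exp_future_prev[OF measurable_h integrable_h])
  moreover have "AE \<omega> in M. real_cond_exp M (\<F> (k + 1)) (\<lambda>\<omega>. h (\<xi> (k + 1 + 1) \<omega>)) \<omega> = transition_op h (\<xi> (k + 1) \<omega>)"
    by (rule cond_exp_past_next[OF measurable_h integrable_h])
  moreover note cond_exp_past_h_next[of "k + 1"]
  ultimately show ?thesis by auto
qed

lemma cond_exp_past_increment:
  assumes "0 \<le> j"
  shows "AE \<omega> in M. real_cond_exp M (\<F> j) (\<lambda>\<omega>'. partial_sum (int i + j) \<omega>' - partial_sum j \<omega>') \<omega> = pred_sum i (\<xi> j \<omega>)"
proof -
  interpret sigma_finite_subalgebra M "\<F> j" by (rule sigma_finite_past)
  have "AE \<omega> in M. real_cond_exp M (\<F> j) (\<lambda>\<omega>'. partial_sum (int i + j) \<omega>' - partial_sum j \<omega>') \<omega>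
      = real_cond_exp M (\<F> j) (\<lambda>\<omega>. \<Sum>m\<in>{1..i}. f (\<xi> (j + int m) \<omega>)) \<omega>"
    by (rule real_cond_exp_cong)
      (auto simp: partial_sum_def sum_int_atLeastAtMost_diff[OF assms, of "\<lambda>l. f (\<xi> l _)"])
  moreover have "AE \<omega> in M. real_cond_exp M (\<F> j) (\<lambda>\<omega>. \<Sum>m\<in>{1..i}. f (\<xi> (j + int m) \<omega>)) \<omega>
      = (\<Sum>m\<in>{1..i}. real_cond_exp M (\<F> j) (\<lambda>\<omega>. f (\<xi> (j + int m) \<omega>)) \<omega>)"
    by (rule real_cond_exp_sum) (rule integrable_f_xi)
  moreover have "AE \<omega> in M. \<forall>m\<in>{1..i}. real_cond_exp M (\<F> j) (\<lambda>\<omega>. f (\<xi> (j + int m) \<omega>)) \<omega> = Pf m (\<xi> j \<omega>)"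
    by (rule AE_finite_allI) (auto intro: cond_exp_past_f_ahead)
  ultimately show ?thesis by eventually_elim (simp add: pred_sum_def)
qed

lemma measurable_mart_diff_past: "mart_diff k \<in> borel_measurable (\<F> k)"
proof -
  interpret sigma_finite_subalgebra M "\<F> (k - 1)" by (rule sigma_finite_past)
  have "real_cond_exp M (\<F> (k - 1)) (theta k) \<in> borel_measurable (\<F> k)"
    by (rule measurable_from_subalg[OF past_mono[of "k - 1" k]]) simp_all
  then show ?thesis unfolding mart_diff_def using measurable_theta_past by measurable
qed

lemma integrable_mart_diff: "integrable M (mart_diff k)"
  and integrable_rev_mart_diff: "integrable M (rev_mart_diff k)"
  unfolding mart_diff_def rev_mart_diff_def
  using integrable_theta sigma_finite_subalgebra.real_cond_exp_int(1)[OF sigma_finite_past integrable_theta]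
    sigma_finite_subalgebra.real_cond_exp_int(1)[OF sigma_finite_future integrable_theta]
  by auto

lemma cond_exp_mart_diff: "AE \<omega> in M. real_cond_exp M (\<F> (k - 1)) (mart_diff k) \<omega> = 0"
  unfolding mart_diff_def
  by (rule sigma_finite_subalgebra.real_cond_exp_diff_real_cond_exp[OF sigma_finite_past integrable_theta])

lemma cond_exp_rev_mart_diff: "AE \<omega> in M. real_cond_exp M (\<G> (k + 1)) (rev_mart_diff k) \<omega> = 0"
  unfolding rev_mart_diff_def
  by (rule sigma_finite_subalgebra.real_cond_exp_diff_real_cond_exp[OF sigma_finite_future integrable_theta])

text \<open>\<open>theta k\<close> is \<open>\<F> k\<close>-measurable by construction; towards the future it is measurable only
  up to a null set, through \<open>h (\<xi> k)\<close>.\<close>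
lemma AE_measurable_rev_mart_diff_future:
  "\<exists>g\<in>borel_measurable (\<G> k). AE \<omega> in M. rev_mart_diff k \<omega> = g \<omega>"
proof
  interpret sigma_finite_subalgebra M "\<G> (k + 1)" by (rule sigma_finite_future)
  have "real_cond_exp M (\<G> (k + 1)) (theta k) \<in> borel_measurable (\<G> k)"
    by (rule measurable_from_subalg[OF future_mono[of k "k + 1"]]) simp_all
  moreover have "(\<lambda>\<omega>. h (\<xi> k \<omega>)) \<in> borel_measurable (\<G> k)"
    by (rule measurable_compose[OF measurable_xi_future measurable_h]) simp
  ultimately show "(\<lambda>\<omega>. h (\<xi> k \<omega>) - real_cond_exp M (\<G> (k + 1)) (theta k) \<omega>) \<in> borel_measurable (\<G> k)"
    by measurable
  show "AE \<omega> in M. rev_mart_diff k \<omega> = h (\<xi> k \<omega>) - real_cond_exp M (\<G> (k + 1)) (theta k) \<omega>"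
    using theta_eq_h[of k] by eventually_elim (simp add: rev_mart_diff_def)
qed

lemma mart_diff_eq: "AE \<omega> in M. mart_diff k \<omega> = h (\<xi> k \<omega>) - h' (\<xi> (k - 1) \<omega>)"
  using theta_eq_h[of k] cond_exp_past_theta[of k] by eventually_elim (simp add: mart_diff_def)

lemma rev_mart_diff_eq: "AE \<omega> in M. rev_mart_diff k \<omega> = h (\<xi> k \<omega>) - h' (\<xi> (k + 1) \<omega>)"
  using theta_eq_h[of k] cond_exp_future_theta[of k] by eventually_elim (simp add: rev_mart_diff_def)

lemma mart_eq: "AE \<omega> in M. mart k \<omega> = (\<Sum>i\<in>{1..k}. h (\<xi> (int i) \<omega>) - h' (\<xi> (int (i - 1)) \<omega>))"
proof -
  have "AE \<omega> in M. \<forall>i\<in>{1..k}. mart_diff (int i) \<omega> = h (\<xi> (int i) \<omega>) - h' (\<xi> (int (i - 1)) \<omega>)"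
    by (rule AE_finite_allI) (use mart_diff_eq in auto)
  then show ?thesis by eventually_elim (simp add: mart_def)
qed

lemma rev_mart_eq: "AE \<omega> in M. rev_mart k \<omega> = (\<Sum>i<k. h (\<xi> (int i) \<omega>) - h' (\<xi> (int i + 1) \<omega>))"
proof -
  have "AE \<omega> in M. \<forall>i\<in>{..<k}. rev_mart_diff (int i) \<omega> = h (\<xi> (int i) \<omega>) - h' (\<xi> (int i + 1) \<omega>)"
    by (rule AE_finite_allI) (use rev_mart_diff_eq in auto)
  then show ?thesis by eventually_elim (simp add: rev_mart_def)
qed

lemma remainder_eq:
  "AE \<omega> in M. remainder k \<omega> = (1 / real n) * (\<Sum>i\<in>{1..k}. pred_sum n (\<xi> (int (i - 1)) \<omega>) + pred_sum n (\<xi> (int i) \<omega>))"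
proof -
  have "AE \<omega> in M. \<forall>i\<in>{1..k}.
      real_cond_exp M (\<F> (int i - 1)) (\<lambda>\<omega>'. partial_sum (int n + int i - 1) \<omega>' - partial_sum (int i - 1) \<omega>') \<omega>
        = pred_sum n (\<xi> (int (i - 1)) \<omega>)
    \<and> real_cond_exp M (\<F> (int i)) (\<lambda>\<omega>'. partial_sum (int n + int i) \<omega>' - partial_sum (int i) \<omega>') \<omega>
        = pred_sum n (\<xi> (int i) \<omega>)"
  proof (rule AE_finite_allI)
    fix i assume "i \<in> {1..k}"
    then show "AE \<omega> in M.
      real_cond_exp M (\<F> (int i - 1)) (\<lambda>\<omega>'. partial_sum (int n + int i - 1) \<omega>' - partial_sum (int i - 1) \<omega>') \<omega>
        = pred_sum n (\<xi> (int (i - 1)) \<omega>)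
    \<and> real_cond_exp M (\<F> (int i)) (\<lambda>\<omega>'. partial_sum (int n + int i) \<omega>' - partial_sum (int i) \<omega>') \<omega>
        = pred_sum n (\<xi> (int i) \<omega>)"
      using cond_exp_past_increment[of "int i - 1" n] cond_exp_past_increment[of "int i" n]
      by (auto simp: add_diff_eq)
  qed simp
  then show ?thesis by eventually_elim (simp add: remainder_def)
qed

lemma partial_sum_decomposition:
  "AE \<omega> in M. partial_sum (int k) \<omega>
     = (1 / 2) * ((f (\<xi> (int k) \<omega>) - f (\<xi> 0 \<omega>)) + mart k \<omega> + rev_mart k \<omega> + remainder k \<omega>)"
  using mart_eq[of k] rev_mart_eq[of k] remainder_eq[of k]
proof eventually_elim
  case (elim \<omega>)
  define a b u c where "a i = h (\<xi> (int i) \<omega>)" and "b i = h' (\<xi> (int i) \<omega>)"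
    and "u i = f (\<xi> (int i) \<omega>)" and "c i = pred_sum n (\<xi> (int i) \<omega>) / real n" for i
  have "a i = b i + u i - c i" for i unfolding a_def b_def u_def c_def by (rule h_eq)
  from sum_decomposition_telescope[of a b u c k, OF this]
  have "2 * partial_sum (int k) \<omega> = (u k - u 0) + mart k \<omega> + rev_mart k \<omega> + remainder k \<omega>"
    using elim by (simp add: a_def b_def u_def c_def partial_sum_def sum_int_atLeastAtMost_of_nat
        sum_distrib_left add_divide_distrib ac_simps)
  then show ?case by (simp add: u_def)
qed

lemma mart_eq_partial_sum:
  "AE \<omega> in M. mart k \<omega> = partial_sum (int k) \<omega> - (1 / real n) * (\<Sum>i\<in>{1..k}. pred_sum n (\<xi> (int i) \<omega>))
     + h' (\<xi> (int k) \<omega>) - h' (\<xi> 0 \<omega>)"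
  using mart_eq[of k]
proof eventually_elim
  case (elim \<omega>)
  define a b u c where "a i = h (\<xi> (int i) \<omega>)" and "b i = h' (\<xi> (int i) \<omega>)"
    and "u i = f (\<xi> (int i) \<omega>)" and "c i = pred_sum n (\<xi> (int i) \<omega>) / real n" for i
  have "a i = b i + u i - c i" for i unfolding a_def b_def u_def c_def by (rule h_eq)
  from sum_forward_telescope[of a b u c k, OF this] elim show ?case
    by (simp add: a_def b_def u_def c_def partial_sum_def sum_int_atLeastAtMost_of_nat sum_divide_distrib)
qed

section \<open>\<open>L\<^sub>p\<close> bounds\<close>

lemma measurable_remainder[measurable]: "remainder k \<in> borel_measurable M"
  and measurable_partial_sum[measurable]: "partial_sum j \<in> borel_measurable M"
  and measurable_mart[measurable]: "mart k \<in> borel_measurable M"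
  unfolding remainder_def partial_sum_def mart_def mart_diff_def by measurable

lemma cond_exp_past_partial_sum:
  "AE \<omega> in M. real_cond_exp M (\<F> 0) (partial_sum (int i)) \<omega> = pred_sum i (\<xi> 0 \<omega>)"
  using cond_exp_past_increment[of 0 i] by (simp add: partial_sum_def[abs_def])

lemma abs_max_abs_remainder_le:
  "AE \<omega> in M. \<bar>Max ((\<lambda>i. \<bar>remainder i \<omega>\<bar>) ` {1..n})\<bar>
     \<le> (1 / real n) * (\<Sum>l\<in>{1..n}. \<bar>pred_sum n (\<xi> (int (l - 1)) \<omega>)\<bar> + \<bar>pred_sum n (\<xi> (int l) \<omega>)\<bar>)"
proof -
  have "AE \<omega> in M. \<forall>i\<in>{1..n}. remainder i \<omega>
      = (1 / real n) * (\<Sum>l\<in>{1..i}. pred_sum n (\<xi> (int (l - 1)) \<omega>) + pred_sum n (\<xi> (int l) \<omega>))"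
    by (rule AE_finite_allI) (use remainder_eq in auto)
  then show ?thesis
  proof eventually_elim
    case (elim \<omega>)
    let ?g = "\<lambda>l. \<bar>pred_sum n (\<xi> (int l) \<omega>)\<bar>"
    let ?V = "(1 / real n) * (\<Sum>l\<in>{1..n}. ?g (l - 1) + ?g l)"
    have "\<bar>remainder i \<omega>\<bar> \<le> ?V" if i: "i \<in> {1..n}" for i
    proof -
      have "\<bar>\<Sum>l\<in>{1..i}. pred_sum n (\<xi> (int (l - 1)) \<omega>) + pred_sum n (\<xi> (int l) \<omega>)\<bar>
          \<le> (\<Sum>l\<in>{1..i}. ?g (l - 1) + ?g l)"
        by (rule order_trans[OF sum_abs sum_mono]) (rule abs_triangle_ineq)
      also have "\<dots> \<le> (\<Sum>l\<in>{1..n}. ?g (l - 1) + ?g l)"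
        using i by (intro sum_mono2) auto
      finally show ?thesis using elim i by (simp add: abs_mult divide_right_mono)
    qed
    then have "Max ((\<lambda>i. \<bar>remainder i \<omega>\<bar>) ` {1..n}) \<le> ?V"
      using n_pos by (intro Max.boundedI) auto
    moreover have "0 \<le> Max ((\<lambda>i. \<bar>remainder i \<omega>\<bar>) ` {1..n})"
      using n_pos by (intro order_trans[OF abs_ge_zero[of "remainder 1 \<omega>"]] Max_ge) auto
    ultimately show ?case by simp
  qed
qed

context
  fixes p :: real
  assumes p: "1 \<le> p" and f_Lp: "integrable \<pi> (\<lambda>x. \<bar>f x\<bar> powr p)"
begin

lemma Lp_integrable_partial_sum: "Lp_integrable M p (partial_sum k)"
  unfolding partial_sum_def using p f_Lp by (intro Lp_integrable_sum) (auto simp: Lp_integrable_xi_iff)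

lemma Lp_integrable_pred_sum_xi: "Lp_integrable M p (\<lambda>\<omega>. pred_sum i (\<xi> j \<omega>))"
proof -
  interpret sigma_finite_subalgebra M "\<F> 0" by (rule sigma_finite_past)
  have "Lp_integrable M p (real_cond_exp M (\<F> 0) (partial_sum (int i)))"
    using Lp_integrable_partial_sum integrable_f_xi
    by (intro Lp_integrable_real_cond_exp[OF p]) (auto simp: partial_sum_def)
  then have "Lp_integrable M p (\<lambda>\<omega>. pred_sum i (\<xi> 0 \<omega>))"
    by (rule Lp_integrable_cong_AE[rotated 2]) (use cond_exp_past_partial_sum[of i] in auto)
  then show ?thesis using Lp_integrable_xi_iff[OF measurable_pred_sum] by blast
qed

lemma Lp_norm_pred_sum_xi:
  "Lp_norm M p (\<lambda>\<omega>. pred_sum i (\<xi> j \<omega>)) = Lp_norm M p (real_cond_exp M (\<F> 0) (partial_sum (int i)))"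
proof -
  have "Lp_norm M p (real_cond_exp M (\<F> 0) (partial_sum (int i))) = Lp_norm M p (\<lambda>\<omega>. pred_sum i (\<xi> 0 \<omega>))"
    by (rule Lp_norm_cong_AE) (use cond_exp_past_partial_sum[of i] in auto)
  then show ?thesis using Lp_norm_xi[OF measurable_pred_sum] by simp
qed

lemma Lp_norm_h'_xi_le:
  "Lp_norm M p (\<lambda>\<omega>. h' (\<xi> j \<omega>)) \<le> Max ((\<lambda>i. Lp_norm M p (real_cond_exp M (\<F> 0) (partial_sum (int i)))) ` {1..n})"
  (is "_ \<le> ?max")
proof -
  have le_max: "Lp_norm M p (\<lambda>\<omega>. pred_sum (Suc i) (\<xi> j \<omega>)) \<le> ?max" if "i < n" for i
    unfolding Lp_norm_pred_sum_xi using that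
    by (intro Max_ge) (auto intro!: image_eqI[where x="Suc i"] simp del: of_nat_Suc)
  have "Lp_norm M p (\<lambda>\<omega>. h' (\<xi> j \<omega>)) = (1 / real n) * Lp_norm M p (\<lambda>\<omega>. \<Sum>i<n. pred_sum (Suc i) (\<xi> j \<omega>))"
    using p unfolding h'_eq_pred_sum by (subst Lp_norm_cmult) auto
  also have "\<dots> \<le> (1 / real n) * (\<Sum>i<n. Lp_norm M p (\<lambda>\<omega>. pred_sum (Suc i) (\<xi> j \<omega>)))"
    by (intro mult_left_mono Lp_norm_sum_le[OF p] Lp_integrable_pred_sum_xi) simp
  also have "\<dots> \<le> (1 / real n) * (\<Sum>i<n. ?max)"
    by (intro mult_left_mono sum_mono le_max) auto
  also have "\<dots> = ?max" using n_pos by simp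
  finally show ?thesis .
qed

lemma Lp_integrable_h'_xi: "Lp_integrable M p (\<lambda>\<omega>. h' (\<xi> j \<omega>))"
  unfolding h'_eq_pred_sum using p
  by (intro Lp_integrable_cmult Lp_integrable_sum Lp_integrable_pred_sum_xi) auto

lemma Lp_norm_max_remainder_le:
  "Lp_norm M p (\<lambda>\<omega>. Max ((\<lambda>i. \<bar>remainder i \<omega>\<bar>) ` {1..n}))
     \<le> 2 * Lp_norm M p (real_cond_exp M (\<F> 0) (partial_sum (int n)))"
proof -
  let ?g = "\<lambda>l \<omega>. \<bar>pred_sum n (\<xi> (int l) \<omega>)\<bar>"
  define V where "V \<omega> = (1 / real n) * (\<Sum>l\<in>{1..n}. ?g (l - 1) \<omega> + ?g l \<omega>)" for \<omega>
  have Lp_g: "Lp_integrable M p (\<lambda>\<omega>. \<bar>pred_sum n (\<xi> j \<omega>)\<bar>)" for j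
    by (intro Lp_integrable_abs Lp_integrable_pred_sum_xi)
  have "AE \<omega> in M. \<bar>Max ((\<lambda>i. \<bar>remainder i \<omega>\<bar>) ` {1..n})\<bar> \<le> \<bar>V \<omega>\<bar>"
    using abs_max_abs_remainder_le
    by eventually_elim (rule order_trans[OF _ abs_ge_self], simp add: V_def)
  moreover have "Lp_integrable M p V"
    using p Lp_g unfolding V_def by (intro Lp_integrable_cmult Lp_integrable_sum Lp_integrable_add) auto
  ultimately have "Lp_norm M p (\<lambda>\<omega>. Max ((\<lambda>i. \<bar>remainder i \<omega>\<bar>) ` {1..n})) \<le> Lp_norm M p V"
    using p by (intro Lp_norm_mono) auto
  also have "\<dots> = (1 / real n) * Lp_norm M p (\<lambda>\<omega>. \<Sum>l\<in>{1..n}. ?g (l - 1) \<omega> + ?g l \<omega>)"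
    unfolding V_def using p by (subst Lp_norm_cmult) auto
  also have "\<dots> \<le> (1 / real n) * (\<Sum>l\<in>{1..n}. Lp_norm M p (?g (l - 1)) + Lp_norm M p (?g l))"
    using p Lp_g
    by (intro mult_left_mono order_trans[OF Lp_norm_sum_le[OF p] sum_mono] Lp_norm_triangle Lp_integrable_add) auto
  also have "\<dots> = 2 * Lp_norm M p (real_cond_exp M (\<F> 0) (partial_sum (int n)))"
    using n_pos by (simp add: Lp_norm_abs Lp_norm_pred_sum_xi)
  finally show ?thesis .
qed

lemma Lp_norm_mart_le:
  "Lp_norm M p (mart n) \<le> Lp_norm M p (partial_sum (int n))
     + 3 * Max ((\<lambda>i. Lp_norm M p (real_cond_exp M (\<F> 0) (partial_sum (int i)))) ` {1..n})"
  (is "_ \<le> _ + 3 * ?max")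
proof -
  define A where "A \<omega> = (1 / real n) * (\<Sum>i\<in>{1..n}. pred_sum n (\<xi> (int i) \<omega>))" for \<omega>
  have Lp_A: "Lp_integrable M p A"
    unfolding A_def using p by (intro Lp_integrable_cmult Lp_integrable_sum Lp_integrable_pred_sum_xi) auto
  have "Lp_norm M p A = (1 / real n) * Lp_norm M p (\<lambda>\<omega>. \<Sum>i\<in>{1..n}. pred_sum n (\<xi> (int i) \<omega>))"
    unfolding A_def using p by (subst Lp_norm_cmult) auto
  also have "\<dots> \<le> (1 / real n) * (\<Sum>i\<in>{1..n}. Lp_norm M p (\<lambda>\<omega>. pred_sum n (\<xi> (int i) \<omega>)))"
    by (intro mult_left_mono Lp_norm_sum_le[OF p] Lp_integrable_pred_sum_xi) simp
  also have "\<dots> = Lp_norm M p (real_cond_exp M (\<F> 0) (partial_sum (int n)))"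
    using n_pos by (simp add: Lp_norm_pred_sum_xi)
  also have "\<dots> \<le> ?max" using n_pos by (intro Max_ge) auto
  finally have A_le: "Lp_norm M p A \<le> ?max" .
  note Lp_h' = Lp_integrable_h'_xi and Lp_S = Lp_integrable_partial_sum
  have "Lp_norm M p (mart n)
      = Lp_norm M p (\<lambda>\<omega>. partial_sum (int n) \<omega> - A \<omega> + h' (\<xi> (int n) \<omega>) - h' (\<xi> 0 \<omega>))"
    using mart_eq_partial_sum[of n] Lp_A Lp_h' Lp_S
    by (intro Lp_norm_cong_AE) (auto simp: A_def Lp_integrable_measurable)
  also have "\<dots> \<le> Lp_norm M p (\<lambda>\<omega>. partial_sum (int n) \<omega> - A \<omega> + h' (\<xi> (int n) \<omega>))
      + Lp_norm M p (\<lambda>\<omega>. h' (\<xi> 0 \<omega>))"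
    using p Lp_A Lp_h' Lp_S by (intro Lp_norm_diff_le Lp_integrable_add Lp_integrable_diff) auto
  also have "\<dots> \<le> Lp_norm M p (\<lambda>\<omega>. partial_sum (int n) \<omega> - A \<omega>) + Lp_norm M p (\<lambda>\<omega>. h' (\<xi> (int n) \<omega>))
      + Lp_norm M p (\<lambda>\<omega>. h' (\<xi> 0 \<omega>))"
    using p Lp_A Lp_h' Lp_S by (intro add_right_mono Lp_norm_triangle Lp_integrable_diff) auto
  also have "\<dots> \<le> Lp_norm M p (partial_sum (int n)) + Lp_norm M p A
      + Lp_norm M p (\<lambda>\<omega>. h' (\<xi> (int n) \<omega>)) + Lp_norm M p (\<lambda>\<omega>. h' (\<xi> 0 \<omega>))"
    using Lp_norm_diff_le[OF p Lp_S Lp_A] by simp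
  also have "\<dots> \<le> Lp_norm M p (partial_sum (int n)) + 3 * ?max"
    using A_le Lp_norm_h'_xi_le[of "int n"] Lp_norm_h'_xi_le[of 0] by simp
  finally show ?thesis .
qed

end

end

theorem mainTheorem10:
  fixes M :: "'a measure" and S :: "'s measure" and \<pi> :: "'s measure"
    and Q :: "'s \<Rightarrow> 's measure" and \<xi> :: "int \<Rightarrow> 'a \<Rightarrow> 's"
    and f :: "'s \<Rightarrow> real" and n :: nat
    and X :: "int \<Rightarrow> 'a \<Rightarrow> real" and Sm :: "int \<Rightarrow> 'a \<Rightarrow> real"
    and \<F> \<G> :: "int \<Rightarrow> 'a measure" and E :: "int \<Rightarrow> ('a \<Rightarrow> real) \<Rightarrow> 'a \<Rightarrow> real"
    and \<theta> D Dt :: "int \<Rightarrow> 'a \<Rightarrow> real" and Mn Mt R :: "nat \<Rightarrow> 'a \<Rightarrow> real"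
  assumes chain: "stationary_reversible_markov M S \<pi> Q \<xi>"
    and f_meas: "f \<in> borel_measurable S"
    and f_L2: "integrable \<pi> (\<lambda>x. (f x)\<^sup>2)"
    and f_centered: "(\<integral>x. f x \<partial>\<pi>) = 0"
    and n_pos: "n \<ge> 1"
    and X_def: "\<And>k. X k = (\<lambda>\<omega>. f (\<xi> k \<omega>))"
    and S_def: "\<And>k. Sm k = (\<lambda>\<omega>. \<Sum>i\<in>{1..k}. X i \<omega>)"
    and F_def: "\<And>k. \<F> k = past_alg M S \<xi> k"
    and G_def: "\<And>k. \<G> k = future_alg M S \<xi> k"
    and E_def: "\<And>k Y. E k Y = real_cond_exp M (\<F> k) Y"
    and theta_def: "\<And>k. \<theta> k = (\<lambda>\<omega>. (1 / real n) *
                      (\<Sum>i<n. E k (\<lambda>\<omega>'. \<Sum>j\<in>{k..k + int i}. X j \<omega>') \<omega>))"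
    and D_def: "\<And>k. D k = (\<lambda>\<omega>. \<theta> k \<omega> - E (k - 1) (\<theta> k) \<omega>)"
    and Dt_def: "\<And>k. Dt k = (\<lambda>\<omega>. \<theta> k \<omega> - real_cond_exp M (\<G> (k + 1)) (\<theta> k) \<omega>)"
    and M_def: "\<And>k. Mn k = (\<lambda>\<omega>. \<Sum>i\<in>{1..k}. D (int i) \<omega>)"
    and Mt_def: "\<And>k. Mt k = (\<lambda>\<omega>. \<Sum>i<k. Dt (int i) \<omega>)"
    and R_def: "\<And>k. R k = (\<lambda>\<omega>. (1 / real n) * (\<Sum>i\<in>{1..k}.
                   E (int i - 1) (\<lambda>\<omega>'. Sm (int n + int i - 1) \<omega>' - Sm (int i - 1) \<omega>') \<omega>
                 + E (int i) (\<lambda>\<omega>'. Sm (int n + int i) \<omega>' - Sm (int i) \<omega>') \<omega>))"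
  shows
    "(\<forall>k. D k \<in> borel_measurable (\<F> k) \<and> integrable M (D k) \<and>
          (AE \<omega> in M. E (k - 1) (D k) \<omega> = 0))
     \<and> (\<forall>k. (\<exists>g\<in>borel_measurable (\<G> k). AE \<omega> in M. Dt k \<omega> = g \<omega>) \<and> integrable M (Dt k) \<and>
          (AE \<omega> in M. real_cond_exp M (\<G> (k + 1)) (Dt k) \<omega> = 0))
     \<and> (\<forall>k::nat. k \<ge> 1 \<longrightarrow> (AE \<omega> in M.
          Sm (int k) \<omega> = (1 / 2) * ((X (int k) \<omega> - X 0 \<omega>) + Mn k \<omega> + Mt k \<omega> + R k \<omega>)))
     \<and> (\<forall>p::real. p \<ge> 1 \<longrightarrow> integrable \<pi> (\<lambda>x. \<bar>f x\<bar> powr p) \<longrightarrow>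
          Lp_norm M p (\<lambda>\<omega>. Max ((\<lambda>i. \<bar>R i \<omega>\<bar>) ` {1..n})) \<le> 2 * Lp_norm M p (E 0 (Sm (int n)))
        \<and> Lp_norm M p (Mn n) \<le> Lp_norm M p (Sm (int n))
              + 3 * Max ((\<lambda>i. Lp_norm M p (E 0 (Sm (int i)))) ` {1..n}))"
proof -
  \<comment> \<open>The interpretation below shadows the hypothesis name \<open>theta_def\<close>.\<close>
  note theta_eq = theta_def
  interpret reversible_markov_chain M S \<pi> Q \<xi> by (rule reversible_markov_chain.intro[OF chain])
  have "f \<in> borel_measurable \<pi>" using f_meas sets_pi by (simp cong: measurable_cong_sets)
  then have "integrable \<pi> f"
    using finite_measure.square_integrable_imp_integrable[OF prob_space.finite_measure[OF prob_space_pi] _ f_L2]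
    by blast
  then interpret reversible_markov_functional M S \<pi> Q \<xi> f n
    using f_meas n_pos chain
    by (intro reversible_markov_functional.intro reversible_markov_functional_axioms.intro reversible_markov_chain.intro)
  have E: "E = (\<lambda>k. real_cond_exp M (past_alg M S \<xi> k))" and G: "\<G> = future_alg M S \<xi>"
    using E_def F_def G_def by auto
  have Sm: "Sm = partial_sum" using S_def X_def by (auto simp: partial_sum_def)
  have \<theta>: "\<theta> = theta" using theta_eq X_def by (auto simp: theta_def E)
  have D: "D = mart_diff" and Dt: "Dt = rev_mart_diff"
    using D_def Dt_def by (auto simp: mart_diff_def rev_mart_diff_def \<theta> E G)
  have Mn: "Mn = mart" and Mt: "Mt = rev_mart" and R: "R = remainder"
    using M_def Mt_def R_def by (auto simp: mart_def rev_mart_def remainder_def D Dt E Sm)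
  show ?thesis
    unfolding E G X_def Sm D Dt Mn Mt R F_def
    by (intro conjI allI impI measurable_mart_diff_past integrable_mart_diff cond_exp_mart_diff
        AE_measurable_rev_mart_diff_future integrable_rev_mart_diff cond_exp_rev_mart_diff
        partial_sum_decomposition Lp_norm_max_remainder_le Lp_norm_mart_le)
qed

end
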